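(* Let $\mathcal C$ be a Clifford circuit with $m$ measurements and let $\mathcal C'$ be the circuit obtained from $\mathcal C$ by replacing the measured operator $S_j$ by $-S_j$ for every $j$ such that, when the Outcome-Code Algorithm is run on $\mathcal C$, the measurement of $S_j$ falls in case (a) with $-S_j\in\langle\mathcal S\rangle$ (i.e. $\epsilon=-1$). Then the outcome code $\mathcal O(\mathcal C')$ of $\mathcal C'$ is a linear subspace of $\mathbb Z_2^m$.
   Context: A Clifford circuit $\mathcal C$ on $n$ qubits is a finite sequence $(C_1,\dots,C_s)$ of operations, each either a unitary Clifford gate or the measurement of a Hermitian $n$-qubit Pauli operator. Each $C_i$ has a level in $\{1,2,\dots\}$; operations of equal level have disjoint supports and levels are nondecreasing along the sequence. The circuit has $m$ measurements; in circuit order the $j$-th measures $S_j$. An execution produces $o\in\mathbb Z_2^m$ with $o_j=0$ for eigenvalue $+1$ and $o_j=1$ for eigenvalue $-1$. The outcome code $\mathcal O(\mathcal C)$ is the set of outcome bit-strings occurring with nonzero probability for some input state. Outcome-Code Algorithm. Maintain a list $\mathcal S$ of pairs $(T,K_T)$ ($T$ a signed Hermitian $n$-qubit Pauli, $K_T\subseteq\{1,\dots,m\}$), initially empty. Process $C_1,\dots,C_s$ in order. If $C_i$ is a unitary $U$, replace each $T$ by $UTU^{-1}$. If $C_i$ measures $S_j$: (a) if $S_j$ or $-S_j$ lies in the group $\langle\mathcal S\rangle$ generated by the $T$'s, write $\epsilon S_j=\prod_{T\in\mathcal T}T$ with $\epsilon\in\{\pm1\}$, let $K_j$ be the symmetric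 difference of the $K_T$, $T\in\mathcal T$, and record the affine check $o_j+\sum_{k\in K_j}o_k=0$ if $\epsilon=+1$, $=1$ if $\epsilon=-1$; (b) otherwise, if some $T\in\mathcal S$ anticommutes with $S_j$, replace every other anticommuting $T'$ by $(TT',K_T\triangle K_{T'})$ and remove $(T,K_T)$; then add $(S_j,\{j\})$. *)

theory Defs
  imports "Jordan_Normal_Form.Matrix" "HOL-Library.Z2"
begin

definition adj :: "complex mat \<Rightarrow> complex mat" where
  "adj U = mat (dim_col U) (dim_row U) (\<lambda>(i,j). cnj (U $$ (j,i)))"

definition unitary_on :: "nat \<Rightarrow> complex mat \<Rightarrow> bool" where
  "unitary_on n U \<longleftrightarrow> U \<in> carrier_mat (2^n) (2^n) \<and>
     U * adj U = 1\<^sub>m (2^n) \<and> adj U * U = 1\<^sub>m (2^n)"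

datatype pauli1 = PI | PX | PY | PZ

fun pauli1_entry :: "pauli1 \<Rightarrow> bool \<Rightarrow> bool \<Rightarrow> complex" where
  "pauli1_entry PI r c = (if r = c then 1 else 0)"
| "pauli1_entry PX r c = (if r \<noteq> c then 1 else 0)"
| "pauli1_entry PY r c = (if r = c then 0 else if r then \<i> else - \<i>)"
| "pauli1_entry PZ r c = (if r = c then (if r then -1 else 1) else 0)"

text \<open>Tensor product P_0 (x) ... (x) P_(n-1); qubit i corresponds to bit i of the index.\<close>
definition pauli_mat :: "nat \<Rightarrow> (nat \<Rightarrow> pauli1) \<Rightarrow> complex mat" where
  "pauli_mat n p = mat (2^n) (2^n)
     (\<lambda>(r,c). \<Prod>i<n. pauli1_entry (p i) (bit r i) (bit c i))"

definition herm_pauli :: "nat \<Rightarrow> complex mat \<Rightarrow> bool" where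
  "herm_pauli n M \<longleftrightarrow> (\<exists>s p. (s = 1 \<or> s = -1) \<and> M = s \<cdot>\<^sub>m pauli_mat n p)"

definition clifford :: "nat \<Rightarrow> complex mat \<Rightarrow> bool" where
  "clifford n U \<longleftrightarrow> unitary_on n U \<and>
     (\<forall>P. herm_pauli n P \<longrightarrow> herm_pauli n (U * P * adj U))"

datatype operation = Gate "complex mat" | Meas "complex mat"

type_synonym circuit = "operation list"

fun valid_op :: "nat \<Rightarrow> operation \<Rightarrow> bool" where
  "valid_op n (Gate U) = clifford n U"
| "valid_op n (Meas S) = herm_pauli n S"

definition valid_circuit :: "nat \<Rightarrow> circuit \<Rightarrow> bool" where
  "valid_circuit n C \<longleftrightarrow> (\<forall>c \<in> set C. valid_op n c)"

fun num_meas :: "circuit \<Rightarrow> nat" where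
  "num_meas [] = 0"
| "num_meas (Gate U # C) = num_meas C"
| "num_meas (Meas S # C) = Suc (num_meas C)"

definition proj :: "nat \<Rightarrow> complex mat \<Rightarrow> bit \<Rightarrow> complex mat" where
  "proj n S b = (1/2) \<cdot>\<^sub>m (1\<^sub>m (2^n) + (if b = 0 then S else - S))"

text \<open>Unnormalised evolution operator of the circuit for outcome string os
  (later operations multiply from the left).\<close>
fun kraus :: "nat \<Rightarrow> circuit \<Rightarrow> bit list \<Rightarrow> complex mat" where
  "kraus n [] os = 1\<^sub>m (2^n)"
| "kraus n (Gate U # C) os = kraus n C os * U"
| "kraus n (Meas S # C) [] = 0\<^sub>m (2^n) (2^n)"
| "kraus n (Meas S # C) (b # os) = kraus n C os * proj n S b"

definition sqnorm :: "complex vec \<Rightarrow> real" where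
  "sqnorm v = (\<Sum>i<dim_vec v. (cmod (v $ i))^2)"

definition unit_state :: "nat \<Rightarrow> complex vec \<Rightarrow> bool" where
  "unit_state n \<psi> \<longleftrightarrow> dim_vec \<psi> = 2^n \<and> sqnorm \<psi> = 1"

definition outcome_prob :: "nat \<Rightarrow> circuit \<Rightarrow> bit list \<Rightarrow> complex vec \<Rightarrow> real" where
  "outcome_prob n C os \<psi> = sqnorm (mult_mat_vec (kraus n C os) \<psi>)"

definition outcome_code :: "nat \<Rightarrow> circuit \<Rightarrow> bit list set" where
  "outcome_code n C = {os. length os = num_meas C \<and>
      (\<exists>\<psi>. unit_state n \<psi> \<and> outcome_prob n C os \<psi> \<noteq> 0)}"

definition is_subspace :: "nat \<Rightarrow> bit list set \<Rightarrow> bool" where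
  "is_subspace m V \<longleftrightarrow> (\<forall>v\<in>V. length v = m) \<and> replicate m 0 \<in> V \<and>
     (\<forall>u\<in>V. \<forall>v\<in>V. map2 (+) u v \<in> V) \<and>
     (\<forall>c. \<forall>v\<in>V. map ((*) c) v \<in> V)"

inductive_set gen_group :: "nat \<Rightarrow> complex mat list \<Rightarrow> complex mat set"
  for n Ts where
  one: "1\<^sub>m (2^n) \<in> gen_group n Ts"
| gen: "T \<in> set Ts \<Longrightarrow> T \<in> gen_group n Ts"
| inv: "T \<in> set Ts \<Longrightarrow> adj T \<in> gen_group n Ts"
| mult: "A \<in> gen_group n Ts \<Longrightarrow> B \<in> gen_group n Ts \<Longrightarrow> A * B \<in> gen_group n Ts"

type_synonym alg_state = "(complex mat \<times> nat set) list"

definition anticommute :: "complex mat \<Rightarrow> complex mat \<Rightarrow> bool" where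
  "anticommute A B \<longleftrightarrow> A * B = - (B * A)"

definition sub_prod :: "nat \<Rightarrow> alg_state \<Rightarrow> nat set \<Rightarrow> complex mat" where
  "sub_prod n S I = foldr (\<lambda>i M. fst (S ! i) * M) (sorted_list_of_set I) (1\<^sub>m (2^n))"

definition sub_symdiff :: "alg_state \<Rightarrow> nat set \<Rightarrow> nat set" where
  "sub_symdiff S I = foldr (\<lambda>i K. (snd (S ! i) - K) \<union> (K - snd (S ! i)))
      (sorted_list_of_set I) {}"

definition symdiff :: "nat set \<Rightarrow> nat set \<Rightarrow> nat set" where
  "symdiff A B = (A - B) \<union> (B - A)"

text \<open>Case (b) update when T = fst (S ! t) anticommutes with S_j.\<close>
definition caseb_update :: "alg_state \<Rightarrow> nat \<Rightarrow> complex mat \<Rightarrow> alg_state" where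
  "caseb_update S t Sj =
     map (\<lambda>(T',K'). if anticommute T' Sj then (fst (S ! t) * T', symdiff (snd (S ! t)) K')
                     else (T',K'))
         (take t S @ drop (Suc t) S)"

text \<open>oca n C S j S' R: running the algorithm on the operations C, starting from
  list S where the next measurement has (1-based) index j, can end in list S'
  having recorded the affine checks R. A check (j, K, eps) stands for
  o_j + sum_{k in K} o_k = 0 (eps = True, i.e. epsilon = +1) or = 1
  (eps = False, i.e. epsilon = -1). All choices of the algorithm are
  nondeterministic.\<close>
inductive oca :: "nat \<Rightarrow> circuit \<Rightarrow> alg_state \<Rightarrow> nat \<Rightarrow> alg_state
                   \<Rightarrow> (nat \<times> nat set \<times> bool) list \<Rightarrow> bool"
  for n where
  finished: "oca n [] S j S []"
| unitary: "oca n C (map (\<lambda>(T,K). (U * T * adj U, K)) S) j S' R \<Longrightarrow>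
            oca n (Gate U # C) S j S' R"
| case_a: "Sj \<in> gen_group n (map fst S) \<or> - Sj \<in> gen_group n (map fst S) \<Longrightarrow>
           I \<subseteq> {..<length S} \<Longrightarrow>
           sub_prod n S I = (if eps then Sj else - Sj) \<Longrightarrow>
           oca n C S (Suc j) S' R \<Longrightarrow>
           oca n (Meas Sj # C) S j S' ((j, sub_symdiff S I, eps) # R)"
| case_b_anti: "Sj \<notin> gen_group n (map fst S) \<Longrightarrow> - Sj \<notin> gen_group n (map fst S) \<Longrightarrow>
           t < length S \<Longrightarrow> anticommute (fst (S ! t)) Sj \<Longrightarrow>
           oca n C (caseb_update S t Sj @ [(Sj, {j})]) (Suc j) S' R \<Longrightarrow>
           oca n (Meas Sj # C) S j S' R"
| case_b_comm: "Sj \<notin> gen_group n (map fst S) \<Longrightarrow> - Sj \<notin> gen_group n (map fst S) \<Longrightarrow>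
           (\<forall>t < length S. \<not> anticommute (fst (S ! t)) Sj) \<Longrightarrow>
           oca n C (S @ [(Sj, {j})]) (Suc j) S' R \<Longrightarrow>
           oca n (Meas Sj # C) S j S' R"

text \<open>Replace the measured operator S_j by -S_j for every (1-based) measurement
  index j in F; j is the index of the next measurement.\<close>
fun flip_meas :: "nat set \<Rightarrow> nat \<Rightarrow> circuit \<Rightarrow> circuit" where
  "flip_meas F j [] = []"
| "flip_meas F j (Gate U # C) = Gate U # flip_meas F j C"
| "flip_meas F j (Meas S # C) =
     Meas (if j \<in> F then - S else S) # flip_meas F (Suc j) C"

end

theory Submission
  imports Defs
begin

text \<open>
  Run the Outcome-Code Algorithm alongside the circuit.  After a prefix with outcomes \<open>w\<close>, the
  generators \<open>(T, K\<^sub>T)\<close> form a list of commuting, independent Pauli operators, and the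
  post-measurement state lies in their joint eigenspace where \<open>T\<close> has eigenvalue
  \<open>(-1)^(\<Sum>k\<in>K\<^sub>T. w k)\<close>.  Writing \<open>P\<^sub>w\<close> for the projector onto it, induction along the
  algorithm shows that the Kraus operator \<open>K\<close> of the remaining circuit satisfies \<open>K P\<^sub>w \<noteq> 0\<close>
  iff the outcomes satisfy the recorded checks.  Gates conjugate everything.  In case (a) the
  measured operator is \<open>\<epsilon> \<Prod>T\<close>, which acts on \<open>P\<^sub>w\<close> as the scalar predicted by the check;
  measuring \<open>-S\<^sub>j\<close> instead of \<open>S\<^sub>j\<close> when \<open>\<epsilon> = -1\<close> makes that check homogeneous.  In case (b)
  with an anticommuting \<open>T\<close>, the projector of \<open>T\<close> factors out of \<open>P\<^sub>w\<close>, and \<open>P Q P = P/2\<close> for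
  the projectors \<open>P\<close>, \<open>Q\<close> of two anticommuting Paulis shows that both outcomes remain possible.
  Independence of the generators is carried along as \<open>tr P\<^sub>w = 2\<^sup>n / 2\<^bsup>length S\<^esup>\<close>, which keeps
  \<open>P\<^sub>w\<close> nonzero.  So the outcome code of the modified circuit is the solution set of homogeneous
  linear equations over \<open>\<int>\<^sub>2\<close>.
\<close>

lemma bit_add_power_below: "i < n \<Longrightarrow> bit (r + 2 ^ n) i = bit (r::nat) i"
  by (metis bit_take_bit_iff mod_add_self2 take_bit_eq_mod)

lemma bit_add_power_self: "r < 2 ^ n \<Longrightarrow> bit ((r::nat) + 2 ^ n) n"
  by (simp add: bit_iff_odd)

lemma not_bit_below_power: "r < 2 ^ n \<Longrightarrow> \<not> bit (r::nat) n"
  by (simp add: bit_iff_odd)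

lemma eq_if_bits_below_eq:
  assumes "r < 2 ^ n" "c < 2 ^ n" "\<forall>i<n. bit r i = bit c i"
  shows "r = (c::nat)"
  by (metis assms bit_eqI bit_take_bit_iff take_bit_nat_eq_self)

lemma sum_lessThan_double:
  fixes g :: "nat \<Rightarrow> 'a::comm_monoid_add"
  shows "sum g {..<m + m} = sum g {..<m} + (\<Sum>r<m. g (r + m))"
proof -
  have "sum g {..<m + m} = sum g {0..<m} + sum g {m..<m + m}"
    by (simp add: lessThan_atLeast0 sum.atLeastLessThan_concat)
  also have "sum g {m..<m + m} = (\<Sum>r\<in>{0..<m}. g (r + m))"
    using sum.shift_bounds_nat_ivl[of g 0 m m] by simp
  finally show ?thesis by (simp add: lessThan_atLeast0)
qed

lemma sum_prod_bits:
  fixes f :: "nat \<Rightarrow> bool \<Rightarrow> 'a::comm_semiring_1"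
  shows "(\<Sum>r<(2::nat) ^ n. \<Prod>i<n. f i (bit r i)) = (\<Prod>i<n. f i False + f i True)"
proof (induction n)
  case 0
  then show ?case by simp
next
  case (Suc n)
  let ?p = "\<lambda>r::nat. \<Prod>i<n. f i (bit r i)"
  have "(\<Sum>r<(2::nat) ^ Suc n. \<Prod>i<Suc n. f i (bit r i))
      = (\<Sum>r<(2::nat) ^ n. \<Prod>i<Suc n. f i (bit r i))
        + (\<Sum>r<(2::nat) ^ n. \<Prod>i<Suc n. f i (bit (r + 2 ^ n) i))"
    using sum_lessThan_double[of "\<lambda>r. \<Prod>i<Suc n. f i (bit r i)" "2 ^ n"] by (simp add: mult_2)
  also have "\<dots> = (\<Sum>r<(2::nat) ^ n. ?p r * f n False) + (\<Sum>r<(2::nat) ^ n. ?p r * f n True)"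
    by (intro arg_cong2[where f = "(+)"] sum.cong)
      (auto simp: not_bit_below_power bit_add_power_below bit_add_power_self intro!: prod.cong)
  finally show ?case by (simp add: Suc sum_distrib_right[symmetric] distrib_left)
qed

lemma bit_add_self [simp]: "(x::bit) + x = 0"
  by (cases x) simp_all

lemma bit_add_eq_0_iff: "(b::bit) + c = 0 \<longleftrightarrow> b = c"
  by (cases b; cases c) simp_all

lemma sum_symdiff_bit:
  fixes f :: "nat \<Rightarrow> bit"
  assumes "finite A" "finite B"
  shows "(\<Sum>k\<in>(A - B) \<union> (B - A). f k) = sum f A + sum f B"
proof -
  have "(\<Sum>k\<in>(A - B) \<union> (B - A). f k) = sum f (A - B) + sum f (B - A)"
    using assms by (intro sum.union_disjoint) auto
  moreover have "sum f A = sum f (A - B) + sum f (A \<inter> B)"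
    using assms by (metis Diff_Diff_Int Diff_subset finite_Diff sum.subset_diff add.commute)
  moreover have "sum f B = sum f (B - A) + sum f (A \<inter> B)"
    using assms by (metis Diff_Diff_Int Diff_subset finite_Diff sum.subset_diff add.commute inf_commute)
  moreover have "\<And>x y z::bit. x + y = (x + z) + (y + z)"
    by (case_tac x; case_tac y; case_tac z) simp_all
  ultimately show ?thesis by metis
qed

lemma smult_one_mat_left [simp]: "(1::'a::monoid_mult) \<cdot>\<^sub>m A = A"
  by (rule eq_matI) auto

lemma smult_smult_mat: "a \<cdot>\<^sub>m (b \<cdot>\<^sub>m A) = (a * b :: 'a::semigroup_mult) \<cdot>\<^sub>m A"
  by (rule eq_matI) (auto simp: mult.assoc)

lemma uminus_eq_smult_mat: "- A = (-1 :: 'a::ring_1) \<cdot>\<^sub>m A"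
  by (rule eq_matI) auto

lemma smult_mult_smult_mat:
  assumes "A \<in> carrier_mat nr m" "B \<in> carrier_mat m nc"
  shows "(a \<cdot>\<^sub>m A) * (b \<cdot>\<^sub>m B) = (a * b :: 'a::comm_ring_1) \<cdot>\<^sub>m (A * B)"
proof -
  have "(a \<cdot>\<^sub>m A) * (b \<cdot>\<^sub>m B) = a \<cdot>\<^sub>m (A * (b \<cdot>\<^sub>m B))"
    using assms by (intro mult_smult_assoc_mat) auto
  also have "A * (b \<cdot>\<^sub>m B) = b \<cdot>\<^sub>m (A * B)"
    using assms by (intro mult_smult_distrib) auto
  finally show ?thesis by (simp add: smult_smult_mat)
qed

lemma smult_zero_left_mat: "A \<in> carrier_mat nr nc \<Longrightarrow> (0::'a::semiring_0) \<cdot>\<^sub>m A = 0\<^sub>m nr nc"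
  by (rule eq_matI) auto

lemma smult_add_smult_half: "(1/2) \<cdot>\<^sub>m (A + c \<cdot>\<^sub>m (d \<cdot>\<^sub>m A)) = ((1 + c * d) / 2 :: complex) \<cdot>\<^sub>m A"
  by (rule eq_matI) (auto simp: field_simps)

definition mat_trace :: "'a::comm_monoid_add mat \<Rightarrow> 'a" where
  "mat_trace A = (\<Sum>i<dim_row A. A $$ (i, i))"

lemma mat_trace_smult:
  "A \<in> carrier_mat m m \<Longrightarrow> mat_trace (a \<cdot>\<^sub>m A) = (a::'a::semiring_0) * mat_trace A"
  by (auto simp: mat_trace_def sum_distrib_left)

lemma mat_trace_add:
  "A \<in> carrier_mat m m \<Longrightarrow> B \<in> carrier_mat m m \<Longrightarrow> mat_trace (A + B) = mat_trace A + mat_trace B"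
  by (auto simp: mat_trace_def sum.distrib)

lemma mat_trace_mult_commute:
  assumes "A \<in> carrier_mat m m" "B \<in> carrier_mat m m"
  shows "mat_trace (A * B) = mat_trace (B * A :: 'a::comm_semiring_0 mat)"
proof -
  have "mat_trace (A * B) = (\<Sum>i<m. \<Sum>k<m. A $$ (i, k) * B $$ (k, i))"
    using assms by (auto simp: mat_trace_def scalar_prod_def lessThan_atLeast0)
  also have "\<dots> = (\<Sum>k<m. \<Sum>i<m. B $$ (k, i) * A $$ (i, k))"
    by (subst sum.swap) (simp add: mult.commute)
  also have "\<dots> = mat_trace (B * A)"
    using assms by (auto simp: mat_trace_def scalar_prod_def lessThan_atLeast0)
  finally show ?thesis .
qed

lemma left_mult_one_mat_pow2 [simp]:
  "(A :: 'a::semiring_1 mat) \<in> carrier_mat (2 ^ n) (2 ^ n) \<Longrightarrow> 1\<^sub>m (2 ^ n) * A = A"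
  and right_mult_one_mat_pow2 [simp]:
  "(A :: 'a::semiring_1 mat) \<in> carrier_mat (2 ^ n) (2 ^ n) \<Longrightarrow> A * 1\<^sub>m (2 ^ n) = A"
  by auto

lemma left_mult_zero_mat_pow2 [simp]:
  "(A :: 'a::semiring_0 mat) \<in> carrier_mat (2 ^ n) (2 ^ n) \<Longrightarrow> 0\<^sub>m (2 ^ n) (2 ^ n) * A = 0\<^sub>m (2 ^ n) (2 ^ n)"
  and right_mult_zero_mat_pow2 [simp]:
  "(A :: 'a::semiring_0 mat) \<in> carrier_mat (2 ^ n) (2 ^ n) \<Longrightarrow> A * 0\<^sub>m (2 ^ n) (2 ^ n) = 0\<^sub>m (2 ^ n) (2 ^ n)"
  by auto

lemma mult_carrier_mat_pow2 [simp]: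
  "A \<in> carrier_mat (2 ^ n) (2 ^ n) \<Longrightarrow> B \<in> carrier_mat (2 ^ n) (2 ^ n) \<Longrightarrow>
   A * B \<in> carrier_mat (2 ^ n) (2 ^ n)"
  by simp

text \<open>The generic rules leave the inner dimensions of a product for the simplifier to guess;
  with all dimensions fixed to \<open>2 ^ n\<close> it can discharge the carrier conditions.\<close>

lemmas mat_pow2_simps =
  mult_add_distrib_mat[where nr = "2 ^ n" and n = "2 ^ n" and nc = "2 ^ n"]
  add_mult_distrib_mat[where nr = "2 ^ n" and n = "2 ^ n" and nc = "2 ^ n"]
  mult_smult_distrib[where nr = "2 ^ n" and n = "2 ^ n" and nc = "2 ^ n"]
  mult_smult_assoc_mat[where nr = "2 ^ n" and n = "2 ^ n" and nc = "2 ^ n"]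
  assoc_mult_mat[where ?n\<^sub>1 = "2 ^ n" and ?n\<^sub>2 = "2 ^ n" and ?n\<^sub>3 = "2 ^ n" and ?n\<^sub>4 = "2 ^ n"]
  for n :: nat

context
  fixes n :: nat
  notes mat_simps = mat_pow2_simps[where n = n]
begin

lemma mult_left_inverse_cancel:
  assumes "V \<in> carrier_mat (2 ^ n) (2 ^ n)" "U \<in> carrier_mat (2 ^ n) (2 ^ n)"
    "X \<in> carrier_mat (2 ^ n) (2 ^ n)" "V * U = 1\<^sub>m (2 ^ n)"
  shows "V * (U * X) = (X :: complex mat)"
  using assms by (metis assoc_mult_mat left_mult_one_mat)

lemma commute_mult:
  assumes "P \<in> carrier_mat (2 ^ n) (2 ^ n)" "X \<in> carrier_mat (2 ^ n) (2 ^ n)"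
    "Y \<in> carrier_mat (2 ^ n) (2 ^ n)" "P * X = X * P" "P * Y = Y * P"
  shows "P * (X * Y) = (X * Y) * (P :: complex mat)"
  using assms by (metis assoc_mult_mat)

lemma anticommute_mult_commute:
  assumes "T \<in> carrier_mat (2 ^ n) (2 ^ n)" "X \<in> carrier_mat (2 ^ n) (2 ^ n)"
    "S \<in> carrier_mat (2 ^ n) (2 ^ n)" "T * S = - (S * T)" "X * S = - (S * X)"
  shows "(T * X) * S = S * (T * (X :: complex mat))"
proof -
  have "(T * X) * S = - (T * (S * X))" using assms by (simp add: mat_simps)
  also have "T * (S * X) = (T * S) * X"
    by (rule assoc_mult_mat[symmetric]) (use assms in auto)
  also have "\<dots> = - (S * (T * X))" using assms by (simp add: mat_simps)
  finally show ?thesis by simp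
qed

lemma mult_conj_eq_zero_iff:
  fixes K U V P :: "complex mat"
  assumes "K \<in> carrier_mat (2 ^ n) (2 ^ n)" "U \<in> carrier_mat (2 ^ n) (2 ^ n)"
    "V \<in> carrier_mat (2 ^ n) (2 ^ n)" "P \<in> carrier_mat (2 ^ n) (2 ^ n)"
    "U * V = 1\<^sub>m (2 ^ n)" "V * U = 1\<^sub>m (2 ^ n)"
  shows "K * U * P = 0\<^sub>m (2 ^ n) (2 ^ n) \<longleftrightarrow> K * (U * P * V) = 0\<^sub>m (2 ^ n) (2 ^ n)"
proof
  assume "K * U * P = 0\<^sub>m (2 ^ n) (2 ^ n)"
  then have "(K * U * P) * V = 0\<^sub>m (2 ^ n) (2 ^ n)" using assms by simp
  then show "K * (U * P * V) = 0\<^sub>m (2 ^ n) (2 ^ n)" using assms by (simp add: mat_simps)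
next
  assume "K * (U * P * V) = 0\<^sub>m (2 ^ n) (2 ^ n)"
  then have "K * (U * P * V) * U = 0\<^sub>m (2 ^ n) (2 ^ n)" using assms by simp
  moreover have "K * (U * P * V) * U = K * U * P"
    using assms by (simp add: mat_simps mult_left_inverse_cancel)
  ultimately show "K * U * P = 0\<^sub>m (2 ^ n) (2 ^ n)" by simp
qed

lemma mult_sandwich_eq_zero_iff:
  fixes K P Q R :: "complex mat"
  assumes c: "K \<in> carrier_mat (2 ^ n) (2 ^ n)" "P \<in> carrier_mat (2 ^ n) (2 ^ n)"
      "Q \<in> carrier_mat (2 ^ n) (2 ^ n)" "R \<in> carrier_mat (2 ^ n) (2 ^ n)"
    and PQP: "P * Q * P = (1/2) \<cdot>\<^sub>m P" and RP: "R * P = P * R" and QR: "Q * R = R * Q"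
  shows "K * P * (Q * R) = 0\<^sub>m (2 ^ n) (2 ^ n) \<longleftrightarrow> K * (R * P) = 0\<^sub>m (2 ^ n) (2 ^ n)"
proof
  assume z: "K * P * (Q * R) = 0\<^sub>m (2 ^ n) (2 ^ n)"
  have "K * P * (Q * R) * P = K * (P * (Q * (P * R)))" using c RP by (simp add: mat_simps)
  also have "\<dots> = K * (P * Q * P) * R" using c by (simp add: mat_simps)
  also have "\<dots> = (1/2) \<cdot>\<^sub>m (K * (R * P))" using c PQP RP by (simp add: mat_simps)
  finally have "(1/2) \<cdot>\<^sub>m (K * (R * P)) = 0\<^sub>m (2 ^ n) (2 ^ n)" using z c by simp
  then have "2 \<cdot>\<^sub>m ((1/2) \<cdot>\<^sub>m (K * (R * P))) = 0\<^sub>m (2 ^ n) (2 ^ n)" by simp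
  then show "K * (R * P) = 0\<^sub>m (2 ^ n) (2 ^ n)" by (simp add: smult_smult_mat)
next
  assume z: "K * (R * P) = 0\<^sub>m (2 ^ n) (2 ^ n)"
  have "K * P * (Q * R) = K * (R * P) * Q" using c QR RP by (simp add: mat_simps)
  then show "K * P * (Q * R) = 0\<^sub>m (2 ^ n) (2 ^ n)" using z c by simp
qed

end

section \<open>Pauli operators\<close>

text \<open>Multiplication table of the single-qubit Pauli matrices:
  \<open>\<sigma>\<^sub>p \<sigma>\<^sub>q = pauli1_phase p q \<cdot> \<sigma>\<^sub>(pauli1_mult p q)\<close>.\<close>

fun pauli1_mult :: "pauli1 \<Rightarrow> pauli1 \<Rightarrow> pauli1" where
  "pauli1_mult PI q = q" | "pauli1_mult PX PI = PX" | "pauli1_mult PY PI = PY"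
| "pauli1_mult PZ PI = PZ"
| "pauli1_mult PX PX = PI" | "pauli1_mult PX PY = PZ" | "pauli1_mult PX PZ = PY"
| "pauli1_mult PY PX = PZ" | "pauli1_mult PY PY = PI" | "pauli1_mult PY PZ = PX"
| "pauli1_mult PZ PX = PY" | "pauli1_mult PZ PY = PX" | "pauli1_mult PZ PZ = PI"

fun pauli1_phase :: "pauli1 \<Rightarrow> pauli1 \<Rightarrow> complex" where
  "pauli1_phase PI q = 1" | "pauli1_phase PX PI = 1" | "pauli1_phase PY PI = 1"
| "pauli1_phase PZ PI = 1"
| "pauli1_phase PX PX = 1" | "pauli1_phase PX PY = \<i>" | "pauli1_phase PX PZ = - \<i>"
| "pauli1_phase PY PX = - \<i>" | "pauli1_phase PY PY = 1" | "pauli1_phase PY PZ = \<i>"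
| "pauli1_phase PZ PX = \<i>" | "pauli1_phase PZ PY = - \<i>" | "pauli1_phase PZ PZ = 1"

lemma pauli1_entry_mult:
  "pauli1_entry p r False * pauli1_entry q False c + pauli1_entry p r True * pauli1_entry q True c
   = pauli1_phase p q * pauli1_entry (pauli1_mult p q) r c"
  by (cases p; cases q; cases r; cases c) simp_all

lemma pauli1_mult_commute: "pauli1_mult p q = pauli1_mult q p"
  by (cases p; cases q) simp_all

lemma pauli1_phase_swap_mult: "pauli1_phase p q * pauli1_phase q p = 1"
  by (cases p; cases q) simp_all

lemma pauli1_phase_swap: "pauli1_phase q p = pauli1_phase p q \<or> pauli1_phase q p = - pauli1_phase p q"
  by (cases p; cases q) simp_all

lemma pauli1_mult_self [simp]: "pauli1_mult p p = PI"
  by (cases p) simp_all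

lemma pauli1_phase_self [simp]: "pauli1_phase p p = 1"
  by (cases p) simp_all

lemma cnj_pauli1_entry: "cnj (pauli1_entry p r c) = pauli1_entry p c r"
  by (cases p; cases r; cases c) simp_all

lemma pauli_mat_carrier [simp]: "pauli_mat n p \<in> carrier_mat (2 ^ n) (2 ^ n)"
  and dim_pauli_mat [simp]: "dim_row (pauli_mat n p) = 2 ^ n" "dim_col (pauli_mat n p) = 2 ^ n"
  by (simp_all add: pauli_mat_def)

lemma pauli_mat_mult:
  "pauli_mat n p * pauli_mat n q =
   (\<Prod>i<n. pauli1_phase (p i) (q i)) \<cdot>\<^sub>m pauli_mat n (\<lambda>i. pauli1_mult (p i) (q i))"
proof (rule eq_matI)
  fix r c assume "r < dim_row ((\<Prod>i<n. pauli1_phase (p i) (q i)) \<cdot>\<^sub>m pauli_mat n (\<lambda>i. pauli1_mult (p i) (q i)))"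
    and "c < dim_col ((\<Prod>i<n. pauli1_phase (p i) (q i)) \<cdot>\<^sub>m pauli_mat n (\<lambda>i. pauli1_mult (p i) (q i)))"
  then have rc: "r < 2 ^ n" "c < 2 ^ n" by (auto simp: pauli_mat_def)
  have "(pauli_mat n p * pauli_mat n q) $$ (r, c) =
      (\<Sum>k<(2::nat) ^ n. \<Prod>i<n. pauli1_entry (p i) (bit r i) (bit k i) * pauli1_entry (q i) (bit k i) (bit c i))"
    using rc by (simp add: pauli_mat_def scalar_prod_def lessThan_atLeast0 prod.distrib)
  also have "\<dots> = (\<Prod>i<n. pauli1_phase (p i) (q i) * pauli1_entry (pauli1_mult (p i) (q i)) (bit r i) (bit c i))"
    by (subst sum_prod_bits) (simp add: pauli1_entry_mult)
  finally show "(pauli_mat n p * pauli_mat n q) $$ (r, c) =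
      ((\<Prod>i<n. pauli1_phase (p i) (q i)) \<cdot>\<^sub>m pauli_mat n (\<lambda>i. pauli1_mult (p i) (q i))) $$ (r, c)"
    using rc by (simp add: pauli_mat_def prod.distrib)
qed (auto simp: pauli_mat_def)

lemma pauli_mat_all_PI:
  assumes "\<forall>i<n. p i = PI"
  shows "pauli_mat n p = 1\<^sub>m (2 ^ n)"
proof (rule eq_matI)
  fix r c assume "r < dim_row (1\<^sub>m (2 ^ n) :: complex mat)" "c < dim_col (1\<^sub>m (2 ^ n) :: complex mat)"
  then have rc: "r < 2 ^ n" "c < 2 ^ n" by auto
  have "(\<Prod>i<n. pauli1_entry (p i) (bit r i) (bit c i)) = (if r = c then 1 else 0)"
  proof (cases "r = c")
    case False
    then obtain i where "i < n" "bit r i \<noteq> bit c i" using eq_if_bits_below_eq[OF rc] by blast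
    then show ?thesis using False assms by (auto intro!: prod_zero)
  qed (use assms in simp)
  then show "pauli_mat n p $$ (r, c) = 1\<^sub>m (2 ^ n) $$ (r, c)" using rc by (simp add: pauli_mat_def)
qed auto

lemma pauli_mat_square: "pauli_mat n p * pauli_mat n p = 1\<^sub>m (2 ^ n)"
  by (simp add: pauli_mat_mult pauli_mat_all_PI)

lemma smult_pauli_mat_cancel:
  assumes "a \<cdot>\<^sub>m pauli_mat n p = b \<cdot>\<^sub>m pauli_mat n p"
  shows "a = b"
proof -
  have "(a \<cdot>\<^sub>m pauli_mat n p) * pauli_mat n p = (b \<cdot>\<^sub>m pauli_mat n p) * pauli_mat n p"
    using assms by simp
  then have "a \<cdot>\<^sub>m 1\<^sub>m (2 ^ n) = b \<cdot>\<^sub>m (1\<^sub>m (2 ^ n) :: complex mat)"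
    by (simp add: mult_smult_assoc_mat[OF pauli_mat_carrier pauli_mat_carrier] pauli_mat_square)
  then have "(a \<cdot>\<^sub>m 1\<^sub>m (2 ^ n)) $$ (0, 0) = (b \<cdot>\<^sub>m (1\<^sub>m (2 ^ n) :: complex mat)) $$ (0, 0)"
    by simp
  then show ?thesis by simp
qed

lemma pauli_phase_swap:
  "(\<Prod>i<(n::nat). pauli1_phase (q i) (p i)) = (\<Prod>i<n. pauli1_phase (p i) (q i)) \<or>
   (\<Prod>i<n. pauli1_phase (q i) (p i)) = - (\<Prod>i<n. pauli1_phase (p i) (q i))"
proof (induction n)
  case (Suc n)
  from pauli1_phase_swap[of "p n" "q n"] Suc show ?case by (auto simp: algebra_simps)
qed simp

lemma pauli_phase_swap_mult:
  "(\<Prod>i<n. pauli1_phase (p i) (q i)) * (\<Prod>i<n. pauli1_phase (q i) (p i)) = 1"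
  by (simp add: prod.distrib[symmetric] pauli1_phase_swap_mult)

lemma mat_trace_pauli_mat:
  assumes "i < n" "p i \<noteq> PI"
  shows "mat_trace (pauli_mat n p) = 0"
proof -
  have "mat_trace (pauli_mat n p) = (\<Sum>r<(2::nat) ^ n. \<Prod>j<n. pauli1_entry (p j) (bit r j) (bit r j))"
    by (simp add: mat_trace_def pauli_mat_def)
  also have "\<dots> = (\<Prod>j<n. pauli1_entry (p j) False False + pauli1_entry (p j) True True)"
    by (rule sum_prod_bits)
  also have "\<dots> = 0"
  proof (rule prod_zero)
    show "\<exists>j\<in>{..<n}. pauli1_entry (p j) False False + pauli1_entry (p j) True True = 0"
      using assms by (intro bexI[of _ i]) (cases "p i"; simp)+
  qed simp
  finally show ?thesis .
qed

lemma herm_pauliE: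
  assumes "herm_pauli n A"
  obtains s p where "s = 1 \<or> s = -1" "A = s \<cdot>\<^sub>m pauli_mat n p"
  using assms by (auto simp: herm_pauli_def)

lemma herm_pauli_carrier: "herm_pauli n A \<Longrightarrow> A \<in> carrier_mat (2 ^ n) (2 ^ n)"
  by (auto elim: herm_pauliE)

lemma herm_pauli_square: "herm_pauli n A \<Longrightarrow> A * A = 1\<^sub>m (2 ^ n)"
  by (auto elim!: herm_pauliE simp: smult_mult_smult_mat[OF pauli_mat_carrier pauli_mat_carrier]
      pauli_mat_square)

lemma adj_herm_pauli: "herm_pauli n A \<Longrightarrow> adj A = A"
proof (elim herm_pauliE)
  fix s p assume s: "s = 1 \<or> s = -1" and A: "A = s \<cdot>\<^sub>m pauli_mat n p"
  then have "cnj s = s" by auto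
  then show "adj A = A"
    by (intro eq_matI) (auto simp: A adj_def pauli_mat_def cnj_pauli1_entry)
qed

lemma mult_smult_pauli_mat:
  "(s \<cdot>\<^sub>m pauli_mat n p) * (t \<cdot>\<^sub>m pauli_mat n q)
   = (s * t * (\<Prod>i<n. pauli1_phase (p i) (q i))) \<cdot>\<^sub>m pauli_mat n (\<lambda>i. pauli1_mult (p i) (q i))"
  by (simp add: smult_mult_smult_mat[OF pauli_mat_carrier pauli_mat_carrier] pauli_mat_mult
      smult_smult_mat)

lemma herm_pauli_commute_or_anticommute:
  assumes "herm_pauli n A" "herm_pauli n B"
  shows "A * B = B * A \<or> A * B = - (B * A)"
proof -
  obtain s p t q where A: "A = s \<cdot>\<^sub>m pauli_mat n p" and B: "B = t \<cdot>\<^sub>m pauli_mat n q"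
    using assms by (auto elim!: herm_pauliE)
  have AB: "A * B = (s * t * (\<Prod>i<n. pauli1_phase (p i) (q i))) \<cdot>\<^sub>m pauli_mat n (\<lambda>i. pauli1_mult (p i) (q i))"
    by (simp add: A B mult_smult_pauli_mat)
  have BA: "B * A = (s * t * (\<Prod>i<n. pauli1_phase (q i) (p i))) \<cdot>\<^sub>m pauli_mat n (\<lambda>i. pauli1_mult (p i) (q i))"
    by (simp add: A B mult_smult_pauli_mat pauli1_mult_commute[of "q _"] mult.commute[of t])
  from pauli_phase_swap[where n = n and p = p and q = q] show ?thesis
    by (auto simp: AB BA uminus_eq_smult_mat[of "_ \<cdot>\<^sub>m _"] smult_smult_mat)
qed

lemma commute_if_not_anticommute:
  assumes "herm_pauli n A" "herm_pauli n B" "\<not> anticommute A B"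
  shows "A * B = B * A"
  using herm_pauli_commute_or_anticommute[OF assms(1,2)] assms(3) by (auto simp: anticommute_def)

lemma herm_pauli_mult:
  assumes "herm_pauli n A" "herm_pauli n B" "A * B = B * A"
  shows "herm_pauli n (A * B)"
proof -
  obtain s p t q where s: "s = 1 \<or> s = -1" and A: "A = s \<cdot>\<^sub>m pauli_mat n p"
    and t: "t = 1 \<or> t = -1" and B: "B = t \<cdot>\<^sub>m pauli_mat n q"
    using assms by (auto elim!: herm_pauliE)
  define \<phi> where "\<phi> = (\<Prod>i<n. pauli1_phase (p i) (q i))"
  define \<phi>' where "\<phi>' = (\<Prod>i<n. pauli1_phase (q i) (p i))"
  have AB: "A * B = (s * t * \<phi>) \<cdot>\<^sub>m pauli_mat n (\<lambda>i. pauli1_mult (p i) (q i))"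
    by (simp add: A B mult_smult_pauli_mat \<phi>_def)
  have "B * A = (s * t * \<phi>') \<cdot>\<^sub>m pauli_mat n (\<lambda>i. pauli1_mult (p i) (q i))"
    by (simp add: A B mult_smult_pauli_mat pauli1_mult_commute[of "q _"] mult.commute[of t] \<phi>'_def)
  with AB assms(3) have "s * t * \<phi> = s * t * \<phi>'"
    by (metis smult_pauli_mat_cancel)
  with s t have "\<phi> = \<phi>'" by auto
  moreover have "\<phi> * \<phi>' = 1"
    unfolding \<phi>_def \<phi>'_def by (rule pauli_phase_swap_mult)
  ultimately have "\<phi> = 1 \<or> \<phi> = -1"
    by (metis power2_eq_square power2_eq_1_iff)
  with s t have "s * t * \<phi> = 1 \<or> s * t * \<phi> = -1" by auto
  with AB show ?thesis unfolding herm_pauli_def by blast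
qed

lemma mat_trace_herm_pauli:
  assumes "herm_pauli n A" "A \<noteq> 1\<^sub>m (2 ^ n)" "A \<noteq> - 1\<^sub>m (2 ^ n)"
  shows "mat_trace A = 0"
proof -
  obtain s p where s: "s = 1 \<or> s = -1" and A: "A = s \<cdot>\<^sub>m pauli_mat n p"
    using assms(1) by (rule herm_pauliE)
  have "\<exists>i<n. p i \<noteq> PI"
  proof (rule ccontr)
    assume "\<not> (\<exists>i<n. p i \<noteq> PI)"
    then have "pauli_mat n p = 1\<^sub>m (2 ^ n)" by (intro pauli_mat_all_PI) auto
    then show False using assms(2,3) s A by (auto simp: uminus_eq_smult_mat[of "1\<^sub>m _"])
  qed
  then show ?thesis using A mat_trace_pauli_mat mat_trace_smult[OF pauli_mat_carrier] by auto
qed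

definition commuting_paulis :: "nat \<Rightarrow> complex mat list \<Rightarrow> bool" where
  "commuting_paulis n Ts \<longleftrightarrow>
     (\<forall>T\<in>set Ts. herm_pauli n T) \<and> (\<forall>T\<in>set Ts. \<forall>T'\<in>set Ts. T * T' = T' * T)"

lemma commuting_paulis_Cons:
  "commuting_paulis n (T # Ts) \<longleftrightarrow>
   herm_pauli n T \<and> (\<forall>T'\<in>set Ts. T * T' = T' * T) \<and> commuting_paulis n Ts"
  unfolding commuting_paulis_def by (simp only: list.set(2) ball_simps) (blast intro: sym)

lemma commuting_paulisD:
  assumes "commuting_paulis n Ts" "T \<in> set Ts"
  shows "herm_pauli n T" "T \<in> carrier_mat (2 ^ n) (2 ^ n)" "T * T = 1\<^sub>m (2 ^ n)"
    and "T' \<in> set Ts \<Longrightarrow> T * T' = T' * T"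
  using assms herm_pauli_carrier herm_pauli_square unfolding commuting_paulis_def by blast+

lemma commuting_paulis_map_fst:
  "commuting_paulis n (map fst L) \<longleftrightarrow>
   (\<forall>x\<in>set L. herm_pauli n (fst x)) \<and> (\<forall>x\<in>set L. \<forall>y\<in>set L. fst x * fst y = fst y * fst x)"
  unfolding commuting_paulis_def by (simp only: set_map ball_simps)

lemma gen_group_mono: "A \<in> gen_group n Ts \<Longrightarrow> set Ts \<subseteq> set Ts' \<Longrightarrow> A \<in> gen_group n Ts'"
  by (induction rule: gen_group.induct) (auto intro: gen_group.intros)

lemma gen_group_subgroup:
  "A \<in> gen_group n Ts' \<Longrightarrow> (\<forall>T\<in>set Ts'. T \<in> gen_group n Ts \<and> adj T \<in> gen_group n Ts) \<Longrightarrow>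
   A \<in> gen_group n Ts"
  by (induction rule: gen_group.induct) (auto intro: gen_group.intros)

section \<open>Eigenprojectors\<close>

definition bit_sign :: "bit \<Rightarrow> complex" where
  "bit_sign b = (if b = 0 then 1 else -1)"

lemma bit_sign_0 [simp]: "bit_sign 0 = 1" and bit_sign_1 [simp]: "bit_sign 1 = -1"
  by (simp_all add: bit_sign_def)

lemma bit_sign_add: "bit_sign (a + b) = bit_sign a * bit_sign b"
  by (cases a; cases b) simp_all

lemma bit_sign_square [simp]: "bit_sign b * bit_sign b = 1"
  by (cases b) simp_all

lemma bit_sign_add_1: "bit_sign (b + 1) = - bit_sign b"
  by (cases b) simp_all

context
  fixes n :: nat
  notes mat_simps = mat_pow2_simps[where n = n]
begin

lemma proj_eq: "S \<in> carrier_mat (2 ^ n) (2 ^ n) \<Longrightarrow>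
  proj n S b = (1/2) \<cdot>\<^sub>m (1\<^sub>m (2 ^ n) + bit_sign b \<cdot>\<^sub>m S)"
  by (cases b) (auto simp: proj_def uminus_eq_smult_mat[of S])

lemma proj_carrier [simp]: "S \<in> carrier_mat (2 ^ n) (2 ^ n) \<Longrightarrow> proj n S b \<in> carrier_mat (2 ^ n) (2 ^ n)"
  by (simp add: proj_eq)

lemma mult_proj_eq:
  assumes "A \<in> carrier_mat (2 ^ n) (2 ^ n)" "S \<in> carrier_mat (2 ^ n) (2 ^ n)"
  shows "A * proj n S b = (1/2) \<cdot>\<^sub>m (A + bit_sign b \<cdot>\<^sub>m (A * S))"
  using assms by (simp add: proj_eq mat_simps)

lemma proj_mult_eq:
  assumes "A \<in> carrier_mat (2 ^ n) (2 ^ n)" "S \<in> carrier_mat (2 ^ n) (2 ^ n)"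
  shows "proj n S b * A = (1/2) \<cdot>\<^sub>m (A + bit_sign b \<cdot>\<^sub>m (S * A))"
  using assms by (simp add: proj_eq mat_simps)

lemma proj_add_proj_succ:
  "S \<in> carrier_mat (2 ^ n) (2 ^ n) \<Longrightarrow> proj n S 0 + proj n S 1 = 1\<^sub>m (2 ^ n)"
  by (simp add: proj_eq) (intro eq_matI; auto simp: field_simps)

context
  fixes S :: "complex mat"
  assumes S: "S \<in> carrier_mat (2 ^ n) (2 ^ n)" "S * S = 1\<^sub>m (2 ^ n)"
begin

lemma mult_proj_self: "S * proj n S b = bit_sign b \<cdot>\<^sub>m proj n S b"
  using S by (simp add: mult_proj_eq) (intro eq_matI; auto simp: proj_eq algebra_simps bit_sign_def)

lemma proj_mult_self: "proj n S b * S = bit_sign b \<cdot>\<^sub>m proj n S b"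
  using S by (simp add: proj_mult_eq) (intro eq_matI; auto simp: proj_eq algebra_simps bit_sign_def)

lemma proj_idem: "proj n S b * proj n S b = proj n S b"
  using S by (simp add: mult_proj_eq proj_mult_self smult_add_smult_half)

lemma proj_mult_proj_succ: "proj n S b * proj n S (b + 1) = 0\<^sub>m (2 ^ n) (2 ^ n)"
  using S by (simp add: mult_proj_eq proj_mult_self smult_add_smult_half bit_sign_add_1
      smult_zero_left_mat)

end

lemma commute_proj:
  assumes "A \<in> carrier_mat (2 ^ n) (2 ^ n)" "S \<in> carrier_mat (2 ^ n) (2 ^ n)" "A * S = S * A"
  shows "A * proj n S b = proj n S b * A"
  using assms by (simp add: proj_mult_eq mult_proj_eq)

lemma anticommute_proj:
  assumes "A \<in> carrier_mat (2 ^ n) (2 ^ n)" "S \<in> carrier_mat (2 ^ n) (2 ^ n)" "A * S = - (S * A)"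
  shows "A * proj n S b = proj n S (b + 1) * A"
  using assms by (simp only: proj_mult_eq mult_proj_eq bit_sign_add_1) (intro eq_matI; auto)

lemma proj_commute_proj:
  assumes "S \<in> carrier_mat (2 ^ n) (2 ^ n)" "T \<in> carrier_mat (2 ^ n) (2 ^ n)" "S * T = T * S"
  shows "proj n S b * proj n T c = proj n T c * proj n S b"
  using assms by (intro commute_proj commute_proj[symmetric]) auto

lemma conj_proj:
  assumes "U \<in> carrier_mat (2 ^ n) (2 ^ n)" "V \<in> carrier_mat (2 ^ n) (2 ^ n)"
    "S \<in> carrier_mat (2 ^ n) (2 ^ n)" "U * V = 1\<^sub>m (2 ^ n)"
  shows "U * proj n S b * V = proj n (U * S * V) b"
  using assms by (simp add: proj_eq mat_simps)

lemma mat_trace_proj_mult: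
  assumes "S \<in> carrier_mat (2 ^ n) (2 ^ n)" "X \<in> carrier_mat (2 ^ n) (2 ^ n)"
  shows "mat_trace (proj n S b * X) = (mat_trace X + bit_sign b * mat_trace (S * X)) / 2"
  using assms by (simp add: proj_mult_eq mat_trace_smult[of _ "2 ^ n"] mat_trace_add)

lemma proj_mult_eigenvector:
  assumes "S \<in> carrier_mat (2 ^ n) (2 ^ n)" "P \<in> carrier_mat (2 ^ n) (2 ^ n)"
    "S * P = bit_sign c \<cdot>\<^sub>m P"
  shows "proj n S b * P = (if b = c then P else 0\<^sub>m (2 ^ n) (2 ^ n))"
proof -
  have "proj n S b * P = ((1 + bit_sign b * bit_sign c) / 2) \<cdot>\<^sub>m P"
    using assms by (simp add: proj_mult_eq smult_add_smult_half)
  also have "\<dots> = (if b = c then P else 0\<^sub>m (2 ^ n) (2 ^ n))"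
    using assms(2) by (cases b; cases c) (auto simp: smult_zero_left_mat)
  finally show ?thesis .
qed

text \<open>On the range of \<open>proj n T s\<close> the involution \<open>T\<close> acts as the scalar \<open>bit_sign s\<close>.\<close>

lemma proj_mult_proj_shift:
  assumes "T \<in> carrier_mat (2 ^ n) (2 ^ n)" "T' \<in> carrier_mat (2 ^ n) (2 ^ n)" "T * T = 1\<^sub>m (2 ^ n)"
  shows "proj n T s * proj n (T * T') (c + s) = proj n T s * proj n T' c"
proof -
  have "proj n T s * (T * T') = (proj n T s * T) * T'" using assms by (simp add: mat_simps)
  also have "\<dots> = bit_sign s \<cdot>\<^sub>m (proj n T s * T')" using assms by (simp add: proj_mult_self mat_simps)
  finally have e: "proj n T s * (T * T') = bit_sign s \<cdot>\<^sub>m (proj n T s * T')" .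
  have "proj n T s * proj n (T * T') (c + s)
      = (1/2) \<cdot>\<^sub>m (proj n T s + bit_sign (c + s) \<cdot>\<^sub>m (proj n T s * (T * T')))"
    using assms by (simp add: mult_proj_eq)
  also have "\<dots> = (1/2) \<cdot>\<^sub>m (proj n T s + bit_sign c \<cdot>\<^sub>m (proj n T s * T'))"
    by (simp only: e smult_smult_mat bit_sign_add) (simp add: mult.assoc)
  also have "\<dots> = proj n T s * proj n T' c"
    using assms by (simp add: mult_proj_eq)
  finally show ?thesis .
qed

lemma proj_sandwich_anticommuting:
  assumes "T \<in> carrier_mat (2 ^ n) (2 ^ n)" "X \<in> carrier_mat (2 ^ n) (2 ^ n)" "X * X = 1\<^sub>m (2 ^ n)"
    "T * X = - (X * T)"
  shows "proj n X b * proj n T s * proj n X b = (1/2) \<cdot>\<^sub>m proj n X b"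
proof -
  let ?P = "proj n X b" and ?P' = "proj n X (b + 1)"
  have P: "?P \<in> carrier_mat (2 ^ n) (2 ^ n)" "?P' \<in> carrier_mat (2 ^ n) (2 ^ n)" using assms by auto
  have TP: "T * ?P = ?P' * T" using assms by (simp add: anticommute_proj)
  have "proj n T s * ?P = (1/2) \<cdot>\<^sub>m (?P + bit_sign s \<cdot>\<^sub>m (?P' * T))"
    using assms P by (simp add: proj_mult_eq TP)
  then have "?P * proj n T s * ?P = ?P * ((1/2) \<cdot>\<^sub>m (?P + bit_sign s \<cdot>\<^sub>m (?P' * T)))"
    using assms P by (simp add: mat_simps)
  also have "\<dots> = (1/2) \<cdot>\<^sub>m (?P * ?P + bit_sign s \<cdot>\<^sub>m ((?P * ?P') * T))"
    using assms P by (simp add: mat_simps)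
  also have "\<dots> = (1/2) \<cdot>\<^sub>m (?P + bit_sign s \<cdot>\<^sub>m (0\<^sub>m (2 ^ n) (2 ^ n) * T))"
    by (simp only: proj_idem[OF assms(2,3)] proj_mult_proj_succ[OF assms(2,3)])
  also have "\<dots> = (1/2) \<cdot>\<^sub>m ?P"
    using assms P by simp
  finally show ?thesis .
qed

end

section \<open>Products of commuting eigenprojectors\<close>

definition proj_prod :: "nat \<Rightarrow> (complex mat \<times> bit) list \<Rightarrow> complex mat" where
  "proj_prod n L = foldr (\<lambda>(T, b) M. proj n T b * M) L (1\<^sub>m (2 ^ n))"

lemma proj_prod_Nil [simp]: "proj_prod n [] = 1\<^sub>m (2 ^ n)"
  and proj_prod_Cons [simp]: "proj_prod n ((T, b) # L) = proj n T b * proj_prod n L"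
  by (simp_all add: proj_prod_def)

lemma proj_prod_Cons': "proj_prod n (x # L) = proj n (fst x) (snd x) * proj_prod n L"
  by (cases x) simp

text \<open>The effect of case (b) on a signed generator: an anticommuting \<open>T'\<close> is replaced by \<open>T T'\<close>,
  whose predicted eigenvalue bit is shifted by the bit \<open>s\<close> of \<open>T\<close>.\<close>

definition anticomm_shift :: "complex mat \<Rightarrow> complex mat \<Rightarrow> bit \<Rightarrow> complex mat \<times> bit \<Rightarrow> complex mat \<times> bit" where
  "anticomm_shift T X s = (\<lambda>(T', c). if anticommute T' X then (T * T', c + s) else (T', c))"

context
  fixes n :: nat
  notes mat_simps = mat_pow2_simps[where n = n]
begin

lemma proj_prod_carrier [simp]:
  "\<forall>x\<in>set L. fst x \<in> carrier_mat (2 ^ n) (2 ^ n) \<Longrightarrow> proj_prod n L \<in> carrier_mat (2 ^ n) (2 ^ n)"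
  by (induction L) auto

lemma proj_prod_append:
  "\<forall>x\<in>set (L1 @ L2). fst x \<in> carrier_mat (2 ^ n) (2 ^ n) \<Longrightarrow>
   proj_prod n (L1 @ L2) = proj_prod n L1 * proj_prod n L2"
  by (induction L1) (auto simp: mat_simps)

lemma commute_proj_prod:
  assumes "A \<in> carrier_mat (2 ^ n) (2 ^ n)" "\<forall>x\<in>set L. fst x \<in> carrier_mat (2 ^ n) (2 ^ n)"
    "\<forall>x\<in>set L. A * fst x = fst x * A"
  shows "A * proj_prod n L = proj_prod n L * A"
  using assms
proof (induction L)
  case (Cons a L)
  obtain T b where a: "a = (T, b)" by force
  have T: "T \<in> carrier_mat (2 ^ n) (2 ^ n)" "A * T = T * A" using Cons.prems by (auto simp: a)
  have "A * proj_prod n (a # L) = (A * proj n T b) * proj_prod n L"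
    using T Cons.prems by (simp add: a mat_simps)
  also have "\<dots> = proj n T b * (A * proj_prod n L)"
    using T Cons.prems by (simp add: commute_proj mat_simps)
  also have "\<dots> = proj_prod n (a # L) * A"
    using T Cons by (simp add: a mat_simps)
  finally show ?case .
qed simp

lemma mult_proj_prod_member:
  assumes "\<forall>x\<in>set L. fst x \<in> carrier_mat (2 ^ n) (2 ^ n) \<and> fst x * fst x = 1\<^sub>m (2 ^ n)"
    "\<forall>x\<in>set L. \<forall>y\<in>set L. fst x * fst y = fst y * fst x" "(T, b) \<in> set L"
  shows "T * proj_prod n L = bit_sign b \<cdot>\<^sub>m proj_prod n L"
  using assms
proof (induction L)
  case (Cons a L)
  obtain T' b' where a: "a = (T', b')" by force
  have T': "T' \<in> carrier_mat (2 ^ n) (2 ^ n)" "T' * T' = 1\<^sub>m (2 ^ n)" using Cons.prems(1) by (auto simp: a)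
  have T: "T \<in> carrier_mat (2 ^ n) (2 ^ n)" using Cons.prems(1,3) by auto
  have L: "\<forall>x\<in>set L. fst x \<in> carrier_mat (2 ^ n) (2 ^ n)" using Cons.prems(1) by auto
  have "T * proj_prod n (a # L) = (T * proj n T' b') * proj_prod n L"
    using T T' L by (simp add: a mat_simps)
  also have "\<dots> = bit_sign b \<cdot>\<^sub>m proj_prod n (a # L)"
  proof (cases "(T, b) = (T', b')")
    case True
    then show ?thesis using T' L by (simp add: a mult_proj_self mat_simps)
  next
    case False
    then have "(T, b) \<in> set L" using Cons.prems(3) by (auto simp: a)
    moreover have "T * T' = T' * T" using Cons.prems(2,3) unfolding a by force
    ultimately have "T * proj n T' b' = proj n T' b' * T" "T * proj_prod n L = bit_sign b \<cdot>\<^sub>m proj_prod n L"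
      using T T' Cons by (simp_all add: commute_proj)
    then show ?thesis using T T' L by (simp add: a mat_simps)
  qed
  finally show ?case .
qed simp

lemma proj_prod_move_to_front:
  assumes "\<forall>x\<in>set (A @ x # B). fst x \<in> carrier_mat (2 ^ n) (2 ^ n)"
    "\<forall>y\<in>set A. fst x * fst y = fst y * fst x"
  shows "proj_prod n (A @ x # B) = proj n (fst x) (snd x) * proj_prod n (A @ B)"
  using assms
proof (induction A)
  case Nil
  then show ?case by (cases x) simp
next
  case (Cons a A)
  obtain T b where a: "a = (T, b)" by force
  have cs: "T \<in> carrier_mat (2 ^ n) (2 ^ n)" "fst x \<in> carrier_mat (2 ^ n) (2 ^ n)"
    "fst x * T = T * fst x" "\<forall>x\<in>set (A @ B). fst x \<in> carrier_mat (2 ^ n) (2 ^ n)"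
    using Cons.prems by (auto simp: a)
  have "proj_prod n ((a # A) @ x # B) = proj n T b * (proj n (fst x) (snd x) * proj_prod n (A @ B))"
    using Cons by (simp add: a)
  also have "\<dots> = (proj n T b * proj n (fst x) (snd x)) * proj_prod n (A @ B)"
    using cs by (simp add: mat_simps)
  also have "proj n T b * proj n (fst x) (snd x) = proj n (fst x) (snd x) * proj n T b"
    using cs by (simp add: proj_commute_proj)
  finally show ?case using cs by (simp add: a mat_simps)
qed

lemma conj_proj_prod:
  assumes "U \<in> carrier_mat (2 ^ n) (2 ^ n)" "V \<in> carrier_mat (2 ^ n) (2 ^ n)"
    "U * V = 1\<^sub>m (2 ^ n)" "V * U = 1\<^sub>m (2 ^ n)"
    and "\<forall>x\<in>set L. fst x \<in> carrier_mat (2 ^ n) (2 ^ n)"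
  shows "U * proj_prod n L * V = proj_prod n (map (\<lambda>(T, b). (U * T * V, b)) L)"
  using assms(5)
proof (induction L)
  case Nil
  then show ?case using assms by simp
next
  case (Cons a L)
  obtain T b where a: "a = (T, b)" by force
  have T: "T \<in> carrier_mat (2 ^ n) (2 ^ n)" and L: "\<forall>x\<in>set L. fst x \<in> carrier_mat (2 ^ n) (2 ^ n)"
    using Cons.prems by (auto simp: a)
  have "U * proj_prod n (a # L) * V = (U * proj n T b * V) * (U * proj_prod n L * V)"
    using assms T L by (simp add: a mat_simps mult_left_inverse_cancel)
  also have "U * proj n T b * V = proj n (U * T * V) b"
    using assms T by (intro conj_proj) auto
  finally show ?case using Cons L by (simp add: a)
qed

lemma mult_proj_prod_cong:
  assumes "list_all2 (\<lambda>x y. Q * proj n (fst x) (snd x) = Q * proj n (fst y) (snd y)) L L'"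
    "Q \<in> carrier_mat (2 ^ n) (2 ^ n)"
    "\<forall>x\<in>set (L @ L'). fst x \<in> carrier_mat (2 ^ n) (2 ^ n) \<and>
       Q * proj n (fst x) (snd x) = proj n (fst x) (snd x) * Q"
  shows "Q * proj_prod n L = Q * proj_prod n L'"
  using assms
proof (induction rule: list_all2_induct)
  case (Cons x L y L')
  let ?P = "proj n (fst x) (snd x)" and ?P' = "proj n (fst y) (snd y)"
  have c: "?P \<in> carrier_mat (2 ^ n) (2 ^ n)" "?P' \<in> carrier_mat (2 ^ n) (2 ^ n)"
    "proj_prod n L \<in> carrier_mat (2 ^ n) (2 ^ n)" "proj_prod n L' \<in> carrier_mat (2 ^ n) (2 ^ n)"
    "Q \<in> carrier_mat (2 ^ n) (2 ^ n)" and Q': "Q * ?P' = ?P' * Q"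
    using Cons.prems by auto
  have IH: "Q * proj_prod n L = Q * proj_prod n L'" using Cons by simp
  have "Q * proj_prod n (x # L) = (Q * ?P) * proj_prod n L"
    using c by (simp add: proj_prod_Cons' mat_simps)
  also have "\<dots> = (?P' * Q) * proj_prod n L"
    by (simp only: Cons.hyps(1) Q')
  also have "\<dots> = (?P' * Q) * proj_prod n L'"
    using c IH by (simp add: mat_simps)
  also have "\<dots> = Q * proj_prod n (y # L')"
    using c by (simp add: proj_prod_Cons' mat_simps flip: Q')
  finally show ?case .
qed simp

lemma proj_mult_proj_prod_anticomm_shift:
  assumes hT: "herm_pauli n T" and L: "\<forall>x\<in>set L. herm_pauli n (fst x) \<and> fst x * T = T * fst x"
  shows "proj n T s * proj_prod n L = proj n T s * proj_prod n (map (anticomm_shift T X s) L)"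
proof (rule mult_proj_prod_cong)
  have T: "T \<in> carrier_mat (2 ^ n) (2 ^ n)" "T * T = 1\<^sub>m (2 ^ n)"
    using hT herm_pauli_carrier herm_pauli_square by auto
  have cL: "\<forall>x\<in>set L. fst x \<in> carrier_mat (2 ^ n) (2 ^ n)" using L herm_pauli_carrier by auto
  show "proj n T s \<in> carrier_mat (2 ^ n) (2 ^ n)" using T by simp
  show "list_all2 (\<lambda>x y. proj n T s * proj n (fst x) (snd x) = proj n T s * proj n (fst y) (snd y))
      L (map (anticomm_shift T X s) L)"
    unfolding list_all2_map2 list_all2_same
  proof
    fix x assume "x \<in> set L"
    moreover obtain T' c where x: "x = (T', c)" by force
    ultimately have "T' \<in> carrier_mat (2 ^ n) (2 ^ n)" using cL by auto
    then show "proj n T s * proj n (fst x) (snd x) =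
        proj n T s * proj n (fst (anticomm_shift T X s x)) (snd (anticomm_shift T X s x))"
      using proj_mult_proj_shift[OF T(1) _ T(2), where T' = T' and s = s and c = c] x by (simp add: anticomm_shift_def)
  qed
  have shift: "fst (anticomm_shift T X s x) \<in> carrier_mat (2 ^ n) (2 ^ n) \<and>
      T * fst (anticomm_shift T X s x) = fst (anticomm_shift T X s x) * T" if "x \<in> set L" for x
    using that L cL T commute_mult[where n = n and P = T and X = T and Y = "fst x"] by (auto simp: anticomm_shift_def split: prod.splits)
  have "fst x \<in> carrier_mat (2 ^ n) (2 ^ n) \<and> T * fst x = fst x * T"
    if "x \<in> set (L @ map (anticomm_shift T X s) L)" for x
    using that L cL shift by force
  then show "\<forall>x\<in>set (L @ map (anticomm_shift T X s) L). fst x \<in> carrier_mat (2 ^ n) (2 ^ n) \<and>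
      proj n T s * proj n (fst x) (snd x) = proj n (fst x) (snd x) * proj n T s"
    using proj_commute_proj[OF T(1)] by blast
qed

lemma mat_trace_proj_prod_mult_outside_group:
  assumes "commuting_paulis n (map fst L)" "herm_pauli n X" "\<forall>x\<in>set L. fst x * X = X * fst x"
    "X \<notin> gen_group n (map fst L)" "- X \<notin> gen_group n (map fst L)"
  shows "mat_trace (proj_prod n L * X) = 0"
  using assms
proof (induction L arbitrary: X)
  \<comment> \<open>Expanding the first projector \<open>(1 \<plusminus> T)/2\<close> leaves the traces of \<open>P X\<close> and \<open>P (T X)\<close>,
    and \<open>T X\<close> lies outside \<open>\<plusminus>\<langle>L\<rangle>\<close> just as \<open>X\<close> does.\<close>
  case Nil
  then have "X \<noteq> 1\<^sub>m (2 ^ n)" "X \<noteq> - 1\<^sub>m (2 ^ n)"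
    using gen_group.one by fastforce+
  then show ?case using Nil herm_pauli_carrier mat_trace_herm_pauli by simp
next
  case (Cons a L)
  obtain T b where a: "a = (T, b)" by force
  have L: "commuting_paulis n (map fst L)" and hT: "herm_pauli n T"
    and TL: "\<forall>x\<in>set L. T * fst x = fst x * T"
    using Cons.prems(1) by (simp_all add: a commuting_paulis_Cons)
  have TX: "T * X = X * T" using Cons.prems(3) by (simp add: a)
  have T: "T \<in> carrier_mat (2 ^ n) (2 ^ n)" "T * T = 1\<^sub>m (2 ^ n)"
    using hT herm_pauli_carrier herm_pauli_square by auto
  have X: "X \<in> carrier_mat (2 ^ n) (2 ^ n)" using Cons.prems(2) herm_pauli_carrier by auto
  have cL: "\<forall>x\<in>set L. fst x \<in> carrier_mat (2 ^ n) (2 ^ n)"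
    using commuting_paulisD(2)[OF L] by simp
  have XL: "\<forall>x\<in>set L. fst x * X = X * fst x" using Cons.prems(3) by simp
  have T_gen: "T \<in> gen_group n (map fst (a # L))" by (rule gen_group.gen) (simp add: a)
  have gen_L: "A \<in> gen_group n (map fst (a # L))" if "A \<in> gen_group n (map fst L)" for A
    using that by (rule gen_group_mono) (simp add: subset_insertI)
  have PL: "proj_prod n L \<in> carrier_mat (2 ^ n) (2 ^ n)" using cL by (rule proj_prod_carrier)
  have tr_X: "mat_trace (proj_prod n L * X) = 0"
    using Cons.IH[OF L Cons.prems(2) XL] Cons.prems(4,5) gen_L by blast
  have tr_TX: "mat_trace (proj_prod n L * (T * X)) = 0"
  proof (rule Cons.IH[OF L])
    show "herm_pauli n (T * X)" using herm_pauli_mult[OF hT Cons.prems(2) TX] .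
    show "\<forall>x\<in>set L. fst x * (T * X) = (T * X) * fst x"
      using TL XL cL T X commute_mult by metis
    have TTX: "T * (T * X) = X" using T X by (simp add: mult_left_inverse_cancel)
    show "T * X \<notin> gen_group n (map fst L)"
      using TTX Cons.prems(4) T_gen gen_L gen_group.mult by metis
    have "T * - (T * X) = - X" using TTX T X by simp
    then show "- (T * X) \<notin> gen_group n (map fst L)"
      using Cons.prems(5) T_gen gen_L gen_group.mult by metis
  qed
  have "T * (proj_prod n L * X) = (T * proj_prod n L) * X"
    using T X PL by (simp add: mat_simps)
  also have "\<dots> = proj_prod n L * (T * X)"
    using T X PL commute_proj_prod[OF T(1) cL TL] by (simp add: mat_simps)
  finally have swap: "T * (proj_prod n L * X) = proj_prod n L * (T * X)" .
  have "mat_trace (proj_prod n (a # L) * X) = mat_trace (proj n T b * (proj_prod n L * X))"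
    using T X PL by (simp add: a mat_simps)
  also have "\<dots> = (mat_trace (proj_prod n L * X) + bit_sign b * mat_trace (T * (proj_prod n L * X))) / 2"
    using T X PL by (simp add: mat_trace_proj_mult)
  finally show ?case using tr_X tr_TX swap by simp
qed

lemma mat_trace_proj_prod_snoc:
  assumes "commuting_paulis n (map fst L)" "herm_pauli n X" "\<forall>x\<in>set L. fst x * X = X * fst x"
    "X \<notin> gen_group n (map fst L)" "- X \<notin> gen_group n (map fst L)"
  shows "mat_trace (proj_prod n (L @ [(X, c)])) = mat_trace (proj_prod n L) / 2"
proof -
  have cL: "\<forall>x\<in>set L. fst x \<in> carrier_mat (2 ^ n) (2 ^ n)"
    using commuting_paulisD(2)[OF assms(1)] by simp
  have X: "X \<in> carrier_mat (2 ^ n) (2 ^ n)" using assms(2) herm_pauli_carrier by auto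
  have "mat_trace (proj_prod n (L @ [(X, c)])) = mat_trace (proj n X c * proj_prod n L)"
    using cL X by (simp add: proj_prod_append mat_trace_mult_commute[of "proj_prod n L" "2 ^ n"])
  also have "\<dots> = (mat_trace (proj_prod n L) + bit_sign c * mat_trace (proj_prod n L * X)) / 2"
    using cL X by (simp add: mat_trace_proj_mult mat_trace_mult_commute[of X "2 ^ n"])
  finally show ?thesis
    using mat_trace_proj_prod_mult_outside_group[OF assms] by simp
qed

end

lemma oca_check_indices: "oca n C S j S' R \<Longrightarrow> \<forall>x\<in>set R. j \<le> fst x"
  by (induction rule: oca.induct) auto

lemma flip_meas_cong: "\<forall>k\<ge>j. k \<in> F \<longleftrightarrow> k \<in> F' \<Longrightarrow> flip_meas F j C = flip_meas F' j C"
  by (induction F j C rule: flip_meas.induct) auto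

lemma num_meas_flip_meas [simp]: "num_meas (flip_meas F j C) = num_meas C"
  by (induction F j C rule: flip_meas.induct) auto

lemma clifford_carrier:
  assumes "clifford n U"
  shows "U \<in> carrier_mat (2 ^ n) (2 ^ n)" "adj U \<in> carrier_mat (2 ^ n) (2 ^ n)"
    "U * adj U = 1\<^sub>m (2 ^ n)" "adj U * U = 1\<^sub>m (2 ^ n)"
  using assms by (auto simp: clifford_def unitary_on_def adj_def)

lemma kraus_flip_meas_carrier:
  "valid_circuit n C \<Longrightarrow> kraus n (flip_meas F j C) os \<in> carrier_mat (2 ^ n) (2 ^ n)"
proof (induction F j C arbitrary: os rule: flip_meas.induct)
  case (2 F j U C)
  then show ?case by (auto simp: valid_circuit_def dest: clifford_carrier)
next
  case (3 F j S C)
  then show ?case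
    by (cases os) (auto simp: valid_circuit_def dest: herm_pauli_carrier)
qed simp

text \<open>An outcome assignment \<open>w\<close> gives every generator \<open>(T, K)\<close> of the algorithm the predicted
  eigenvalue of \<open>T\<close>, encoded by the bit \<open>\<Sum>k\<in>K. w k\<close>.\<close>

definition signed_gens :: "(nat \<Rightarrow> bit) \<Rightarrow> alg_state \<Rightarrow> (complex mat \<times> bit) list" where
  "signed_gens w S = map (\<lambda>(T, K). (T, \<Sum>k\<in>K. w k)) S"

definition assign_outcomes :: "(nat \<Rightarrow> bit) \<Rightarrow> nat \<Rightarrow> bit list \<Rightarrow> nat \<Rightarrow> bit" where
  "assign_outcomes w j os = (\<lambda>k. if j \<le> k \<and> k < j + length os then os ! (k - j) else w k)"

definition checks_hold :: "(nat \<times> nat set \<times> bool) list \<Rightarrow> (nat \<Rightarrow> bit) \<Rightarrow> bool" where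
  "checks_hold R w \<longleftrightarrow> (\<forall>(j, K, e)\<in>set R. w j + (\<Sum>k\<in>K. w k) = 0)"

definition minus_checks :: "(nat \<times> nat set \<times> bool) list \<Rightarrow> nat set" where
  "minus_checks R = {j. \<exists>K. (j, K, False) \<in> set R}"

lemma minus_checks_Cons:
  "minus_checks ((j, K, e) # R) = (if e then minus_checks R else insert j (minus_checks R))"
  by (auto simp: minus_checks_def)

lemma checks_hold_Cons:
  "checks_hold ((j, K, e) # R) w \<longleftrightarrow> w j + (\<Sum>k\<in>K. w k) = 0 \<and> checks_hold R w"
  by (simp add: checks_hold_def)

lemma assign_outcomes_Cons: "assign_outcomes w j (b # os) = assign_outcomes (w(j := b)) (Suc j) os"
  by (rule ext) (auto simp: assign_outcomes_def nth_Cons' Suc_diff_le)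

lemma assign_outcomes_below: "k < j \<Longrightarrow> assign_outcomes w j os k = w k"
  by (simp add: assign_outcomes_def)

lemma assign_outcomes_first: "assign_outcomes w j (b # os) j = b"
  by (simp add: assign_outcomes_def)

lemma fst_signed_gens [simp]: "map fst (signed_gens w S) = map fst S"
  by (induction S) (auto simp: signed_gens_def)

lemma signed_gens_eq_zip: "signed_gens w S = zip (map fst S) (map (\<lambda>x. \<Sum>k\<in>snd x. w k) S)"
  by (induction S) (auto simp: signed_gens_def)

lemma set_signed_gens: "x \<in> set (signed_gens w S) \<Longrightarrow> fst x \<in> fst ` set S"
  by (auto simp: signed_gens_def intro: rev_image_eqI)

lemma signed_gens_fun_upd:
  "\<forall>x\<in>set S. snd x \<subseteq> {..<j} \<Longrightarrow> signed_gens (w(j := b)) S = signed_gens w S"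
  unfolding signed_gens_def by (intro map_cong refl) (fastforce intro!: sum.cong)

lemma signed_gens_snoc:
  "\<forall>x\<in>set S. snd x \<subseteq> {..<j} \<Longrightarrow>
   signed_gens (w(j := b)) (S @ [(T, {j})]) = signed_gens w S @ [(T, b)]"
  using signed_gens_fun_upd[of S j w b] by (simp add: signed_gens_def)

lemma signed_gens_conj: "signed_gens w (map (\<lambda>(T, K). (f T, K)) S) = map (\<lambda>(T, b). (f T, b)) (signed_gens w S)"
  by (induction S) (auto simp: signed_gens_def)

lemma zip_map_conj: "length bs = length S \<Longrightarrow>
  zip (map fst (map (\<lambda>(T, K). (f T, K)) S)) bs = map (\<lambda>(T, b). (f T, b)) (zip (map fst S) bs)"
  by (induction S arbitrary: bs) (auto simp: length_Suc_conv)

lemma foldr_symdiff_finite: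
  "\<forall>x\<in>set S. finite (snd x) \<Longrightarrow> set xs \<subseteq> {..<length S} \<Longrightarrow>
   finite (foldr (\<lambda>i K. (snd (S ! i) - K) \<union> (K - snd (S ! i))) xs {})"
  by (induction xs) auto

lemma foldr_symdiff_bound:
  "\<forall>x\<in>set S. snd x \<subseteq> {..<j} \<Longrightarrow> set xs \<subseteq> {..<length S} \<Longrightarrow>
   foldr (\<lambda>i K. (snd (S ! i) - K) \<union> (K - snd (S ! i))) xs {} \<subseteq> {..<j}"
  by (induction xs) (auto dest!: nth_mem)

lemma set_sorted_list_of_subset:
  assumes "I \<subseteq> {..<m::nat}"
  shows "set (sorted_list_of_set I) \<subseteq> {..<m}"
  using assms finite_subset[OF assms finite_lessThan] by simp

lemma caseb_update_eq:
  "caseb_update S t X = map (\<lambda>(T', K'). if anticommute T' X then (fst (S ! t) * T', symdiff (snd (S ! t)) K')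
     else (T', K')) (take t S @ drop (Suc t) S)"
  by (simp add: caseb_update_def)

lemma length_caseb_update: "t < length S \<Longrightarrow> length (caseb_update S t X) = length S - 1"
  by (simp add: caseb_update_def)

lemma set_caseb_updateE:
  assumes "y \<in> set (caseb_update S t X)"
  obtains x where "x \<in> set S" "anticommute (fst x) X" "y = (fst (S ! t) * fst x, symdiff (snd (S ! t)) (snd x))"
  | x where "x \<in> set S" "\<not> anticommute (fst x) X" "y = x"
  using assms unfolding caseb_update_def
  by (auto dest: in_set_takeD in_set_dropD split: if_splits)

lemma signed_gens_caseb_update:
  assumes "\<forall>x\<in>set Y. finite (snd x)" "finite KT"
  shows "signed_gens w (map (\<lambda>(T', K'). if anticommute T' X then (T * T', symdiff KT K') else (T', K')) Y)
    = map (anticomm_shift T X (\<Sum>k\<in>KT. w k)) (signed_gens w Y)"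
  using assms
proof (induction Y)
  case (Cons y Y)
  obtain T' K' where y: "y = (T', K')" by force
  have "(\<Sum>k\<in>symdiff KT K'. w k) = (\<Sum>k\<in>K'. w k) + (\<Sum>k\<in>KT. w k)"
    using Cons.prems y sum_symdiff_bit[of KT K' w] unfolding symdiff_def by (simp only: add.commute) simp
  then show ?case using Cons by (simp add: signed_gens_def anticomm_shift_def y)
qed (simp add: signed_gens_def)

lemma zip_caseb_update:
  "length Y = length bs \<Longrightarrow>
   map (anticomm_shift T X s) (zip (map fst Y) (map2 (\<lambda>x c. if anticommute (fst x) X then c + s else c) Y bs))
   = zip (map fst (map (\<lambda>(T', K'). if anticommute T' X then (T * T', symdiff KT K') else (T', K')) Y)) bs"
proof (induction Y bs rule: list_induct2)
  case (Cons y Y c bs)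
  obtain T' K' where y: "y = (T', K')" by force
  have "anticomm_shift T X s (fst y, if anticommute (fst y) X then c + s else c)
     = (fst ((\<lambda>(T', K'). if anticommute T' X then (T * T', symdiff KT K') else (T', K')) y), c)"
    by (cases "anticommute T' X")
      (simp_all only: anticomm_shift_def y fst_conv prod.case if_True if_False add.assoc bit_add_self add_0_right)
  then show ?case using Cons by simp
qed simp

section \<open>The invariant of the algorithm\<close>

text \<open>The trace condition says that the generators are independent: every joint eigenspace has
  dimension \<open>2 ^ n / 2 ^ length S\<close>, so no product of eigenprojectors vanishes.\<close>

definition alg_invariant :: "nat \<Rightarrow> alg_state \<Rightarrow> nat \<Rightarrow> bool" where
  "alg_invariant n S j \<longleftrightarrow> commuting_paulis n (map fst S) \<and>
     (\<forall>x\<in>set S. finite (snd x) \<and> snd x \<subseteq> {..<j}) \<and>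
     (\<forall>bs. length bs = length S \<longrightarrow>
        mat_trace (proj_prod n (zip (map fst S) bs)) = 2 ^ n / 2 ^ length S)"

context
  fixes n :: nat
  notes mat_simps = mat_pow2_simps[where n = n]
begin

lemma alg_invariantD:
  assumes "alg_invariant n S j"
  shows "\<forall>x\<in>set S. herm_pauli n (fst x)" "\<forall>x\<in>set S. fst x \<in> carrier_mat (2 ^ n) (2 ^ n)"
    "\<forall>x\<in>set S. \<forall>y\<in>set S. fst x * fst y = fst y * fst x"
    "\<forall>x\<in>set S. finite (snd x) \<and> snd x \<subseteq> {..<j}"
    "\<And>bs. length bs = length S \<Longrightarrow> mat_trace (proj_prod n (zip (map fst S) bs)) = 2 ^ n / 2 ^ length S"
  using assms herm_pauli_carrier unfolding alg_invariant_def commuting_paulis_map_fst by blast+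

lemma alg_invariantI:
  assumes "\<forall>x\<in>set S. herm_pauli n (fst x)" "\<forall>x\<in>set S. \<forall>y\<in>set S. fst x * fst y = fst y * fst x"
    "\<forall>x\<in>set S. finite (snd x) \<and> snd x \<subseteq> {..<j}"
    "\<And>bs. length bs = length S \<Longrightarrow> mat_trace (proj_prod n (zip (map fst S) bs)) = 2 ^ n / 2 ^ length S"
  shows "alg_invariant n S j"
  using assms unfolding alg_invariant_def commuting_paulis_map_fst by blast

lemma alg_invariant_Nil: "alg_invariant n [] j"
  by (simp add: alg_invariant_def commuting_paulis_def mat_trace_def)

lemma alg_invariant_Suc: "alg_invariant n S j \<Longrightarrow> alg_invariant n S (Suc j)"
  unfolding alg_invariant_def by fastforce

lemma signed_gens_carrier:
  "alg_invariant n S j \<Longrightarrow> \<forall>x\<in>set (signed_gens w S). fst x \<in> carrier_mat (2 ^ n) (2 ^ n)"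
  using alg_invariantD(2) set_signed_gens by fastforce

lemma proj_prod_signed_gens_nonzero:
  assumes "alg_invariant n S j"
  shows "proj_prod n (signed_gens w S) \<noteq> 0\<^sub>m (2 ^ n) (2 ^ n)"
proof
  assume "proj_prod n (signed_gens w S) = 0\<^sub>m (2 ^ n) (2 ^ n)"
  moreover have "mat_trace (proj_prod n (signed_gens w S)) = 2 ^ n / 2 ^ length S"
    using alg_invariantD(5)[OF assms] by (simp add: signed_gens_eq_zip)
  ultimately show False by (simp add: mat_trace_def)
qed

lemma alg_invariant_conj:
  assumes inv: "alg_invariant n S j" and U: "clifford n U"
  shows "alg_invariant n (map (\<lambda>(T, K). (U * T * adj U, K)) S) j"
proof -
  note Uc = clifford_carrier[OF U]
  note h = alg_invariantD(1)[OF inv] and cS = alg_invariantD(2)[OF inv]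
    and c = alg_invariantD(3)[OF inv] and l = alg_invariantD(4)[OF inv]
  let ?S1 = "map (\<lambda>(T, K). (U * T * adj U, K)) S"
  have conj_mult: "(U * A * adj U) * (U * B * adj U) = U * (A * B) * adj U"
    if "A \<in> carrier_mat (2 ^ n) (2 ^ n)" "B \<in> carrier_mat (2 ^ n) (2 ^ n)" for A B
    using that Uc by (simp add: mat_simps mult_left_inverse_cancel)
  show ?thesis
  proof (rule alg_invariantI)
    show "\<forall>x\<in>set ?S1. herm_pauli n (fst x)" using h U by (auto simp: clifford_def)
    show "\<forall>x\<in>set ?S1. \<forall>y\<in>set ?S1. fst x * fst y = fst y * fst x"
    proof (intro ballI)
      fix x y assume "x \<in> set ?S1" "y \<in> set ?S1"
      then obtain A KA B KB where "(A, KA) \<in> set S" "x = (U * A * adj U, KA)"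
        "(B, KB) \<in> set S" "y = (U * B * adj U, KB)" by auto
      then show "fst x * fst y = fst y * fst x"
        using c cS conj_mult by (metis fst_conv)
    qed
    show "\<forall>x\<in>set ?S1. finite (snd x) \<and> snd x \<subseteq> {..<j}" using l by (auto simp: case_prod_beta)
    fix bs :: "bit list" assume len: "length bs = length ?S1"
    let ?L = "zip (map fst S) bs"
    have cL: "\<forall>x\<in>set ?L. fst x \<in> carrier_mat (2 ^ n) (2 ^ n)" using cS by (force dest: set_zip_leftD)
    have P: "proj_prod n ?L \<in> carrier_mat (2 ^ n) (2 ^ n)" using cL by (rule proj_prod_carrier)
    have "proj_prod n (zip (map fst ?S1) bs) = U * proj_prod n ?L * adj U"
      using len zip_map_conj[of bs S "\<lambda>T. U * T * adj U"] conj_proj_prod[OF Uc cL] by simp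
    also have "mat_trace \<dots> = mat_trace (proj_prod n ?L * adj U * U)"
      using Uc P by (simp add: mat_simps mat_trace_mult_commute[of U])
    also have "\<dots> = mat_trace (proj_prod n ?L)" using Uc P by (simp add: mat_simps)
    finally show "mat_trace (proj_prod n (zip (map fst ?S1) bs)) = 2 ^ n / 2 ^ length ?S1"
      using alg_invariantD(5)[OF inv] len by simp
  qed
qed

lemma foldr_mult_carrier:
  "\<forall>x\<in>set S. fst x \<in> carrier_mat (2 ^ n) (2 ^ n) \<Longrightarrow> set xs \<subseteq> {..<length S} \<Longrightarrow>
   foldr (\<lambda>i M. fst (S ! i) * M) xs (1\<^sub>m (2 ^ n)) \<in> carrier_mat (2 ^ n) (2 ^ n)"
  by (induction xs) auto

lemma foldr_mult_proj_prod_signed_gens: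
  assumes inv: "alg_invariant n S j" and xs: "set xs \<subseteq> {..<length S}"
  shows "foldr (\<lambda>i M. fst (S ! i) * M) xs (1\<^sub>m (2 ^ n)) * proj_prod n (signed_gens w S) =
    bit_sign (\<Sum>k\<in>foldr (\<lambda>i K. (snd (S ! i) - K) \<union> (K - snd (S ! i))) xs {}. w k) \<cdot>\<^sub>m
    proj_prod n (signed_gens w S)"
  using xs
proof (induction xs)
  let ?P = "proj_prod n (signed_gens w S)"
  note cS = alg_invariantD(2)[OF inv] and l = alg_invariantD(4)[OF inv]
  have P: "?P \<in> carrier_mat (2 ^ n) (2 ^ n)"
    using signed_gens_carrier[OF inv] by (rule proj_prod_carrier)
  {
    case Nil
    show ?case using P by simp
  next
    case (Cons i xs)
    let ?K = "foldr (\<lambda>i K. (snd (S ! i) - K) \<union> (K - snd (S ! i))) xs {}"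
    have i: "i < length S" and xs: "set xs \<subseteq> {..<length S}" using Cons.prems by auto
    have Si: "fst (S ! i) \<in> carrier_mat (2 ^ n) (2 ^ n)" using cS i by auto
    have eig: "fst (S ! i) * ?P = bit_sign (\<Sum>k\<in>snd (S ! i). w k) \<cdot>\<^sub>m ?P"
    proof (rule mult_proj_prod_member)
      show "\<forall>x\<in>set (signed_gens w S). fst x \<in> carrier_mat (2 ^ n) (2 ^ n) \<and> fst x * fst x = 1\<^sub>m (2 ^ n)"
        using alg_invariantD(1)[OF inv] herm_pauli_carrier herm_pauli_square
        by (auto simp: signed_gens_def)
      show "\<forall>x\<in>set (signed_gens w S). \<forall>y\<in>set (signed_gens w S). fst x * fst y = fst y * fst x"
        using inv unfolding alg_invariant_def fst_signed_gens[symmetric, where w = w] commuting_paulis_map_fst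
        by blast
      show "(fst (S ! i), \<Sum>k\<in>snd (S ! i). w k) \<in> set (signed_gens w S)"
        using i by (force simp: signed_gens_def in_set_conv_nth)
    qed
    have e: "(\<Sum>k\<in>(snd (S ! i) - ?K) \<union> (?K - snd (S ! i)). w k) = (\<Sum>k\<in>snd (S ! i). w k) + (\<Sum>k\<in>?K. w k)"
      using l i foldr_symdiff_finite[OF _ xs] by (intro sum_symdiff_bit) auto
    have "foldr (\<lambda>i M. fst (S ! i) * M) (i # xs) (1\<^sub>m (2 ^ n)) * ?P
        = fst (S ! i) * (foldr (\<lambda>i M. fst (S ! i) * M) xs (1\<^sub>m (2 ^ n)) * ?P)"
      using Si P foldr_mult_carrier[OF cS xs] by (simp add: mat_simps)
    also have "\<dots> = bit_sign (\<Sum>k\<in>?K. w k) \<cdot>\<^sub>m (fst (S ! i) * ?P)"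
      using Si P by (simp add: Cons.IH[OF xs] mat_simps)
    also have "\<dots> = bit_sign ((\<Sum>k\<in>snd (S ! i). w k) + (\<Sum>k\<in>?K. w k)) \<cdot>\<^sub>m ?P"
      by (simp only: eig smult_smult_mat bit_sign_add mult.commute)
    finally show ?case by (simp only: e foldr.simps o_apply)
  }
qed

lemma sub_prod_mult_proj_prod_signed_gens:
  assumes "alg_invariant n S j" "I \<subseteq> {..<length S}"
  shows "sub_prod n S I * proj_prod n (signed_gens w S) =
    bit_sign (\<Sum>k\<in>sub_symdiff S I. w k) \<cdot>\<^sub>m proj_prod n (signed_gens w S)"
  unfolding sub_prod_def sub_symdiff_def
  by (rule foldr_mult_proj_prod_signed_gens[OF assms(1) set_sorted_list_of_subset[OF assms(2)]])

lemma sub_prod_carrier: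
  assumes "alg_invariant n S j" "I \<subseteq> {..<length S}"
  shows "sub_prod n S I \<in> carrier_mat (2 ^ n) (2 ^ n)"
  unfolding sub_prod_def
  by (rule foldr_mult_carrier[OF alg_invariantD(2)[OF assms(1)] set_sorted_list_of_subset[OF assms(2)]])

lemma sub_symdiff_bound:
  assumes "alg_invariant n S j" "I \<subseteq> {..<length S}"
  shows "sub_symdiff S I \<subseteq> {..<j}"
  unfolding sub_symdiff_def
  using alg_invariantD(4)[OF assms(1)] set_sorted_list_of_subset[OF assms(2)]
  by (intro foldr_symdiff_bound) auto

lemma proj_prod_signed_gens_snoc:
  assumes inv: "alg_invariant n S j" and X: "X \<in> carrier_mat (2 ^ n) (2 ^ n)"
    and comm: "\<forall>x\<in>set S. fst x * X = X * fst x"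
  shows "proj_prod n (signed_gens (w(j := b)) (S @ [(X, {j})])) = proj n X b * proj_prod n (signed_gens w S)"
proof -
  note cS = signed_gens_carrier[OF inv]
  have "proj n X b * proj_prod n (signed_gens w S) = proj_prod n (signed_gens w S) * proj n X b"
  proof (rule commute_proj_prod[OF _ cS])
    show "\<forall>x\<in>set (signed_gens w S). proj n X b * fst x = fst x * proj n X b"
      using comm alg_invariantD(2)[OF inv] X by (auto simp: signed_gens_def intro!: commute_proj[symmetric])
  qed (use X in simp)
  then show ?thesis
    using alg_invariantD(4)[OF inv] cS X by (simp add: signed_gens_snoc proj_prod_append)
qed

lemma alg_invariant_snoc:
  assumes inv: "alg_invariant n S j" and hX: "herm_pauli n X"
    and comm: "\<forall>x\<in>set S. fst x * X = X * fst x"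
    and X_gen: "X \<notin> gen_group n (map fst S)" "- X \<notin> gen_group n (map fst S)"
  shows "alg_invariant n (S @ [(X, {j})]) (Suc j)"
proof (rule alg_invariantI)
  note h = alg_invariantD(1)[OF inv] and c = alg_invariantD(3)[OF inv]
  show "\<forall>x\<in>set (S @ [(X, {j})]). herm_pauli n (fst x)" using h hX by auto
  show "\<forall>x\<in>set (S @ [(X, {j})]). \<forall>y\<in>set (S @ [(X, {j})]). fst x * fst y = fst y * fst x"
    using c comm by (auto simp: ball_Un)
  show "\<forall>x\<in>set (S @ [(X, {j})]). finite (snd x) \<and> snd x \<subseteq> {..<Suc j}"
    using alg_invariantD(4)[OF inv] by fastforce
  fix bs :: "bit list" assume len: "length bs = length (S @ [(X, {j})])"
  then obtain bs0 c where bs: "bs = bs0 @ [c]" and len0: "length bs0 = length S"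
    by (metis append_butlast_last_id length_append_singleton length_butlast diff_Suc_1 list.size(3) nat.distinct(1))
  let ?L = "zip (map fst S) bs0"
  have "commuting_paulis n (map fst ?L)"
    using inv len0 by (simp add: alg_invariant_def)
  moreover have "\<forall>x\<in>set ?L. fst x * X = X * fst x" using comm by (force dest: set_zip_leftD)
  ultimately have "mat_trace (proj_prod n (?L @ [(X, c)])) = mat_trace (proj_prod n ?L) / 2"
    using mat_trace_proj_prod_snoc[OF _ hX] X_gen len0 by simp
  then show "mat_trace (proj_prod n (zip (map fst (S @ [(X, {j})])) bs)) = 2 ^ n / 2 ^ length (S @ [(X, {j})])"
    using alg_invariantD(5)[OF inv len0] bs len0 by simp
qed

lemma caseb_update_props:
  assumes inv: "alg_invariant n S j" and hX: "herm_pauli n X" and t: "t < length S"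
    and anti: "anticommute (fst (S ! t)) X" and y: "y \<in> set (caseb_update S t X)"
  shows "herm_pauli n (fst y)" "fst y * X = X * fst y"
    "fst y \<in> gen_group n (map fst S)" "adj (fst y) \<in> gen_group n (map fst S)"
    "finite (snd y)" "snd y \<subseteq> {..<j}" "\<forall>z\<in>set S. fst y * fst z = fst z * fst y"
proof -
  note h = alg_invariantD(1)[OF inv] and c = alg_invariantD(3)[OF inv] and l = alg_invariantD(4)[OF inv]
  let ?T = "fst (S ! t)"
  have tS: "S ! t \<in> set S" using t by simp
  have hT: "herm_pauli n ?T" using h tS by auto
  have T: "?T \<in> carrier_mat (2 ^ n) (2 ^ n)" using hT herm_pauli_carrier by auto
  have X: "X \<in> carrier_mat (2 ^ n) (2 ^ n)" using hX herm_pauli_carrier by auto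
  have T_gen: "?T \<in> gen_group n (map fst S)" using tS by (intro gen_group.gen) auto
  have S_gen: "fst x \<in> gen_group n (map fst S)" if "x \<in> set S" for x
    using that by (intro gen_group.gen) auto
  have comm_all: "\<forall>z\<in>set S. A * fst z = fst z * A" if "A = fst x \<or> A = ?T * fst x" "x \<in> set S" for A x
  proof
    fix z assume z: "z \<in> set S"
    have "fst z * fst x = fst x * fst z" "fst z * ?T = ?T * fst z" using c z tS that(2) by blast+
    then show "A * fst z = fst z * A"
      using that z tS alg_invariantD(2)[OF inv] commute_mult[where n = n and P = "fst z" and X = ?T and Y = "fst x"] by auto
  qed
  have "herm_pauli n (fst y) \<and> fst y * X = X * fst y \<and> fst y \<in> gen_group n (map fst S) \<and>
    finite (snd y) \<and> snd y \<subseteq> {..<j} \<and> (\<forall>z\<in>set S. fst y * fst z = fst z * fst y)"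
    using y
  proof (cases rule: set_caseb_updateE)
    case (1 x)
    have xc: "fst x \<in> carrier_mat (2 ^ n) (2 ^ n)" using h 1 herm_pauli_carrier by auto
    have "?T * fst x = fst x * ?T" using c 1 tS by blast
    then have "herm_pauli n (fst y)" using 1 h herm_pauli_mult[OF hT] by simp
    moreover have "fst y * X = X * fst y"
      using 1 anti anticommute_mult_commute[OF T xc X] by (simp add: anticommute_def)
    moreover have "fst y \<in> gen_group n (map fst S)" using 1 T_gen S_gen gen_group.mult by simp
    moreover have "\<forall>z\<in>set S. fst y * fst z = fst z * fst y" using comm_all[of "?T * fst x" x] 1 by simp
    ultimately show ?thesis using 1 l tS by (auto simp: symdiff_def)
  next
    case (2 x)
    moreover have "\<forall>z\<in>set S. fst y * fst z = fst z * fst y" using comm_all[of "fst x" x] 2 by simp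
    ultimately show ?thesis using h l S_gen commute_if_not_anticommute[OF _ hX] by auto
  qed
  then show "herm_pauli n (fst y)" "fst y * X = X * fst y" "fst y \<in> gen_group n (map fst S)"
    "finite (snd y)" "snd y \<subseteq> {..<j}" "\<forall>z\<in>set S. fst y * fst z = fst z * fst y"
    by blast+
  then show "adj (fst y) \<in> gen_group n (map fst S)"
    using \<open>herm_pauli n (fst y)\<close> adj_herm_pauli by simp
qed

lemma caseb_update_pair_commute:
  assumes inv: "alg_invariant n S j" and hX: "herm_pauli n X" and t: "t < length S"
    and anti: "anticommute (fst (S ! t)) X"
    and y: "y \<in> set (caseb_update S t X)" and y': "y' \<in> set (caseb_update S t X)"
  shows "fst y * fst y' = fst y' * fst y"
proof -
  note props = caseb_update_props[OF inv hX t anti]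
  have yc: "fst y \<in> carrier_mat (2 ^ n) (2 ^ n)" using props(1)[OF y] herm_pauli_carrier by auto
  have yS: "\<forall>z\<in>set S. fst y * fst z = fst z * fst y" using props(7)[OF y] .
  from y' show ?thesis
  proof (cases rule: set_caseb_updateE)
    case (1 x)
    then show ?thesis
      using yS t alg_invariantD(2)[OF inv] yc
        commute_mult[where n = n and P = "fst y" and X = "fst (S ! t)" and Y = "fst x"]
      by simp
  next
    case (2 x)
    then show ?thesis using yS by simp
  qed
qed

lemma proj_prod_signed_gens_caseb_update:
  assumes inv: "alg_invariant n S j" and t: "t < length S"
  shows "proj_prod n (signed_gens w S) =
    proj n (fst (S ! t)) (\<Sum>k\<in>snd (S ! t). w k) * proj_prod n (signed_gens w (caseb_update S t X))"
proof -
  note h = alg_invariantD(1)[OF inv] and c = alg_invariantD(3)[OF inv] and l = alg_invariantD(4)[OF inv]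
  let ?T = "fst (S ! t)" and ?s = "\<Sum>k\<in>snd (S ! t). w k"
  let ?A = "take t S" and ?B = "drop (Suc t) S"
  have tS: "S ! t \<in> set S" using t by simp
  have AB: "set (?A @ ?B) \<subseteq> set S" by (auto dest: in_set_takeD in_set_dropD)
  have split: "signed_gens w S = signed_gens w ?A @ (?T, ?s) # signed_gens w ?B"
    using id_take_nth_drop[OF t] by (metis (no_types, lifting) case_prod_beta list.simps(9) map_append signed_gens_def)
  have "proj_prod n (signed_gens w ?A @ (?T, ?s) # signed_gens w ?B) =
      proj n (fst (?T, ?s)) (snd (?T, ?s)) * proj_prod n (signed_gens w ?A @ signed_gens w ?B)"
  proof (rule proj_prod_move_to_front)
    show "\<forall>x\<in>set (signed_gens w ?A @ (?T, ?s) # signed_gens w ?B). fst x \<in> carrier_mat (2 ^ n) (2 ^ n)"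
      using signed_gens_carrier[OF inv, of w] split by simp
    show "\<forall>y\<in>set (signed_gens w ?A). fst (?T, ?s) * fst y = fst y * fst (?T, ?s)"
    proof
      fix y assume "y \<in> set (signed_gens w ?A)"
      then obtain z where "z \<in> set S" "fst y = fst z" by (auto dest!: set_signed_gens in_set_takeD)
      then show "fst (?T, ?s) * fst y = fst y * fst (?T, ?s)" using c tS by simp
    qed
  qed
  then have "proj_prod n (signed_gens w S) = proj n ?T ?s * proj_prod n (signed_gens w ?A @ signed_gens w ?B)"
    by (simp add: split)
  also have "signed_gens w ?A @ signed_gens w ?B = signed_gens w (?A @ ?B)" by (simp add: signed_gens_def)
  also have "proj n ?T ?s * proj_prod n (signed_gens w (?A @ ?B))
      = proj n ?T ?s * proj_prod n (map (anticomm_shift ?T X ?s) (signed_gens w (?A @ ?B)))"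
  proof (rule proj_mult_proj_prod_anticomm_shift)
    show "herm_pauli n ?T" using h tS by auto
    show "\<forall>x\<in>set (signed_gens w (?A @ ?B)). herm_pauli n (fst x) \<and> fst x * ?T = ?T * fst x"
    proof
      fix y assume "y \<in> set (signed_gens w (?A @ ?B))"
      then obtain z where "z \<in> set (?A @ ?B)" "fst y = fst z" by (auto dest!: set_signed_gens)
      then have "z \<in> set S" "fst y = fst z" using AB by auto
      then show "herm_pauli n (fst y) \<and> fst y * ?T = ?T * fst y" using h c tS by simp
    qed
  qed
  also have "map (anticomm_shift ?T X ?s) (signed_gens w (?A @ ?B)) = signed_gens w (caseb_update S t X)"
    unfolding caseb_update_eq using l AB tS by (intro signed_gens_caseb_update[symmetric]) auto
  finally show ?thesis .
qed

lemma mult_proj_caseb_eq_zero_iff: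
  assumes inv: "alg_invariant n S j" and hX: "herm_pauli n X" and t: "t < length S"
    and anti: "anticommute (fst (S ! t)) X" and K: "K \<in> carrier_mat (2 ^ n) (2 ^ n)"
  shows "K * proj n X b * proj_prod n (signed_gens w S) = 0\<^sub>m (2 ^ n) (2 ^ n) \<longleftrightarrow>
    K * proj_prod n (signed_gens (w(j := b)) (caseb_update S t X @ [(X, {j})])) = 0\<^sub>m (2 ^ n) (2 ^ n)"
proof -
  let ?T = "fst (S ! t)" and ?C = "caseb_update S t X"
  let ?Q = "proj n ?T (\<Sum>k\<in>snd (S ! t). w k)" and ?R = "proj_prod n (signed_gens w ?C)" and ?P = "proj n X b"
  note props = caseb_update_props[OF inv hX t anti]
  have T: "?T \<in> carrier_mat (2 ^ n) (2 ^ n)" using alg_invariantD(2)[OF inv] t by simp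
  have X: "X \<in> carrier_mat (2 ^ n) (2 ^ n)" "X * X = 1\<^sub>m (2 ^ n)"
    using hX herm_pauli_carrier herm_pauli_square by auto
  have cC: "\<forall>x\<in>set (signed_gens w ?C). fst x \<in> carrier_mat (2 ^ n) (2 ^ n) \<and>
      fst x * ?T = ?T * fst x \<and> fst x * X = X * fst x"
  proof
    fix x assume "x \<in> set (signed_gens w ?C)"
    then obtain y where y: "y \<in> set ?C" "fst x = fst y" by (auto dest!: set_signed_gens)
    then show "fst x \<in> carrier_mat (2 ^ n) (2 ^ n) \<and> fst x * ?T = ?T * fst x \<and> fst x * X = X * fst x"
      using props(1,2,7)[OF y(1)] herm_pauli_carrier t by simp
  qed
  have R: "?R \<in> carrier_mat (2 ^ n) (2 ^ n)" using cC by (intro proj_prod_carrier) blast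
  have RP: "?R * ?P = ?P * ?R"
    using cC X by (intro commute_proj_prod[symmetric]) (auto intro: commute_proj[symmetric])
  have QR: "?Q * ?R = ?R * ?Q"
    using cC T by (intro commute_proj_prod) (auto intro: commute_proj[symmetric])
  have PQP: "?P * ?Q * ?P = (1/2) \<cdot>\<^sub>m ?P"
    using proj_sandwich_anticommuting[OF T X] anti by (simp add: anticommute_def)
  have "proj_prod n (signed_gens (w(j := b)) (?C @ [(X, {j})])) = ?R * ?P"
    using signed_gens_snoc[of ?C j w b X] props(6) cC X by (simp add: proj_prod_append)
  moreover have "proj_prod n (signed_gens w S) = ?Q * ?R"
    by (rule proj_prod_signed_gens_caseb_update[OF inv t])
  ultimately show ?thesis
    using mult_sandwich_eq_zero_iff[OF K _ _ R PQP RP QR] X T by simp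
qed

lemma proj_mult_proj_prod_caseb_update:
  assumes inv: "alg_invariant n S j" and t: "t < length S"
    and len: "length bs = length S - 1"
  obtains bsS where "length bsS = length S"
    "proj n (fst (S ! t)) s * proj_prod n (zip (map fst (caseb_update S t X)) bs) =
     proj_prod n (zip (map fst S) bsS)"
proof -
  note h = alg_invariantD(1)[OF inv] and c = alg_invariantD(3)[OF inv]
  let ?T = "fst (S ! t)" and ?A = "take t S" and ?B = "drop (Suc t) S"
  have tS: "S ! t \<in> set S" using t by simp
  have AB: "set (?A @ ?B) \<subseteq> set S" by (auto dest: in_set_takeD in_set_dropD)
  define cs where "cs = map2 (\<lambda>x c. if anticommute (fst x) X then c + s else c) (?A @ ?B) bs"
  have lcs: "length cs = length S - 1" using len t by (simp add: cs_def)
  define L where "L = zip (map fst (?A @ ?B)) cs"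
  define bsS where "bsS = take t cs @ s # drop t cs"
  have len_bsS: "length bsS = length S" using lcs t by (simp add: bsS_def)
  have ltA: "length (map fst ?A) = length (take t cs)" using t lcs by simp
  have mS: "map fst S = map fst ?A @ ?T # map fst ?B"
    using id_take_nth_drop[OF t] by (metis list.simps(9) map_append)
  have split: "zip (map fst S) bsS = zip (map fst ?A) (take t cs) @ (?T, s) # zip (map fst ?B) (drop t cs)"
    unfolding mS bsS_def using ltA by simp
  have L: "zip (map fst ?A) (take t cs) @ zip (map fst ?B) (drop t cs) = L"
    unfolding L_def using ltA by (metis append_take_drop_id map_append zip_append)
  have L_S: "fst x \<in> fst ` set S" if "x \<in> set L" for x
  proof -
    from that have "fst x \<in> set (map fst (?A @ ?B))" unfolding L_def by (metis prod.collapse set_zip_leftD)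
    then show ?thesis using AB by auto
  qed
  have "proj_prod n (zip (map fst S) bsS) = proj n (fst (?T, s)) (snd (?T, s)) * proj_prod n L"
    unfolding split L[symmetric]
  proof (rule proj_prod_move_to_front)
    show "\<forall>x\<in>set (zip (map fst ?A) (take t cs) @ (?T, s) # zip (map fst ?B) (drop t cs)).
        fst x \<in> carrier_mat (2 ^ n) (2 ^ n)"
      using alg_invariantD(2)[OF inv] unfolding split[symmetric] by (force dest: set_zip_leftD)
    show "\<forall>y\<in>set (zip (map fst ?A) (take t cs)). fst (?T, s) * fst y = fst y * fst (?T, s)"
    proof
      fix y assume "y \<in> set (zip (map fst ?A) (take t cs))"
      then have "fst y \<in> set (map fst ?A)" by (metis prod.collapse set_zip_leftD)
      then obtain z where "z \<in> set S" "fst y = fst z" by (auto dest: in_set_takeD)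
      then show "fst (?T, s) * fst y = fst y * fst (?T, s)" using c tS by simp
    qed
  qed
  also have "\<dots> = proj n ?T s * proj_prod n (map (anticomm_shift ?T X s) L)"
  proof (simp only: fst_conv snd_conv, rule proj_mult_proj_prod_anticomm_shift)
    show "herm_pauli n ?T" using h tS by simp
    show "\<forall>x\<in>set L. herm_pauli n (fst x) \<and> fst x * ?T = ?T * fst x"
    proof
      fix x assume "x \<in> set L"
      then obtain z where "z \<in> set S" "fst x = fst z" using L_S by blast
      then show "herm_pauli n (fst x) \<and> fst x * ?T = ?T * fst x" using h c tS by simp
    qed
  qed
  also have "map (anticomm_shift ?T X s) L = zip (map fst (caseb_update S t X)) bs"
    unfolding L_def cs_def caseb_update_eq by (rule zip_caseb_update) (use len t in simp)
  finally show ?thesis using that len_bsS by simp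
qed

lemma mat_trace_proj_prod_caseb_update:
  assumes inv: "alg_invariant n S j" and hX: "herm_pauli n X" and t: "t < length S"
    and anti: "anticommute (fst (S ! t)) X" and len: "length bs = length S - 1"
  shows "mat_trace (proj_prod n (zip (map fst (caseb_update S t X)) bs)) = 2 * (2 ^ n / 2 ^ length S)"
proof -
  let ?T = "fst (S ! t)" and ?Z = "proj_prod n (zip (map fst (caseb_update S t X)) bs)"
  have T: "?T \<in> carrier_mat (2 ^ n) (2 ^ n)" using alg_invariantD(2)[OF inv] t by simp
  have Z: "?Z \<in> carrier_mat (2 ^ n) (2 ^ n)"
    using caseb_update_props(1)[OF inv hX t anti] herm_pauli_carrier
    by (intro proj_prod_carrier) (force dest: set_zip_leftD)
  have half: "mat_trace (proj n ?T s * ?Z) = 2 ^ n / 2 ^ length S" for s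
    using proj_mult_proj_prod_caseb_update[OF inv t len, of s X] alg_invariantD(5)[OF inv] by metis
  have "?Z = proj n ?T 0 * ?Z + proj n ?T 1 * ?Z"
    using T Z proj_add_proj_succ[OF T] by (simp flip: add_mult_distrib_mat[of _ "2 ^ n" "2 ^ n"])
  then have "mat_trace ?Z = mat_trace (proj n ?T 0 * ?Z) + mat_trace (proj n ?T 1 * ?Z)"
    using T Z by (metis mat_trace_add mult_carrier_mat_pow2 proj_carrier)
  then show ?thesis using half by simp
qed

lemma alg_invariant_caseb_update:
  assumes inv: "alg_invariant n S j" and hX: "herm_pauli n X" and t: "t < length S"
    and anti: "anticommute (fst (S ! t)) X"
  shows "alg_invariant n (caseb_update S t X) j"
proof (rule alg_invariantI)
  note props = caseb_update_props[OF inv hX t anti]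
  show "\<forall>x\<in>set (caseb_update S t X). herm_pauli n (fst x)" using props(1) by blast
  show "\<forall>x\<in>set (caseb_update S t X). \<forall>y\<in>set (caseb_update S t X). fst x * fst y = fst y * fst x"
    using caseb_update_pair_commute[OF inv hX t anti] by blast
  show "\<forall>x\<in>set (caseb_update S t X). finite (snd x) \<and> snd x \<subseteq> {..<j}" using props(5,6) by blast
  fix bs :: "bit list" assume "length bs = length (caseb_update S t X)"
  then have "length bs = length S - 1" using t by (simp add: length_caseb_update)
  moreover have "(2::complex) ^ length S = 2 * 2 ^ (length S - 1)"
    using t by (cases "length S") auto
  ultimately show "mat_trace (proj_prod n (zip (map fst (caseb_update S t X)) bs)) =
      2 ^ n / 2 ^ length (caseb_update S t X)"
    using mat_trace_proj_prod_caseb_update[OF inv hX t anti] t by (simp add: length_caseb_update)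
qed

lemma alg_invariant_caseb_update_snoc:
  assumes inv: "alg_invariant n S j" and hX: "herm_pauli n X" and t: "t < length S"
    and anti: "anticommute (fst (S ! t)) X"
    and X_gen: "X \<notin> gen_group n (map fst S)" "- X \<notin> gen_group n (map fst S)"
  shows "alg_invariant n (caseb_update S t X @ [(X, {j})]) (Suc j)"
proof (rule alg_invariant_snoc[OF alg_invariant_caseb_update[OF inv hX t anti] hX])
  note props = caseb_update_props[OF inv hX t anti]
  show "\<forall>x\<in>set (caseb_update S t X). fst x * X = X * fst x" using props(2) by blast
  have "A \<in> gen_group n (map fst S)" if "A \<in> gen_group n (map fst (caseb_update S t X))" for A
    using that by (rule gen_group_subgroup) (use props(3,4) in auto)
  then show "X \<notin> gen_group n (map fst (caseb_update S t X))"
    "- X \<notin> gen_group n (map fst (caseb_update S t X))"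
    using X_gen by blast+
qed

lemma kraus_flip_meas_nonzero_iff:
  assumes "oca n C S j S' R" "valid_circuit n C" "alg_invariant n S j" "length os = num_meas C"
  shows "kraus n (flip_meas (minus_checks R) j C) os * proj_prod n (signed_gens w S) \<noteq> 0\<^sub>m (2 ^ n) (2 ^ n)
    \<longleftrightarrow> checks_hold R (assign_outcomes w j os)"
  using assms
proof (induction arbitrary: w os rule: oca.induct)
  case (finished S j)
  then show ?case using proj_prod_signed_gens_nonzero[OF finished(2)] signed_gens_carrier[OF finished(2)]
    by (simp add: checks_hold_def)
next
  case (unitary C U S j S' R)
  have U: "clifford n U" and C: "valid_circuit n C" using unitary.prems(1) by (auto simp: valid_circuit_def)
  note Uc = clifford_carrier[OF U]
  let ?K = "kraus n (flip_meas (minus_checks R) j C) os"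
  have K: "?K \<in> carrier_mat (2 ^ n) (2 ^ n)" using kraus_flip_meas_carrier[OF C] .
  have cS: "\<forall>x\<in>set (signed_gens w S). fst x \<in> carrier_mat (2 ^ n) (2 ^ n)"
    using signed_gens_carrier[OF unitary.prems(2)] .
  have P: "proj_prod n (signed_gens w S) \<in> carrier_mat (2 ^ n) (2 ^ n)" using cS by (rule proj_prod_carrier)
  have "kraus n (flip_meas (minus_checks R) j (Gate U # C)) os * proj_prod n (signed_gens w S)
      \<noteq> 0\<^sub>m (2 ^ n) (2 ^ n) \<longleftrightarrow> ?K * (U * proj_prod n (signed_gens w S) * adj U) \<noteq> 0\<^sub>m (2 ^ n) (2 ^ n)"
    using mult_conj_eq_zero_iff[OF K Uc(1,2) P Uc(3,4)] by simp
  also have "U * proj_prod n (signed_gens w S) * adj U =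
      proj_prod n (signed_gens w (map (\<lambda>(T, K). (U * T * adj U, K)) S))"
    using conj_proj_prod[OF Uc cS] by (simp add: signed_gens_conj)
  also have "?K * \<dots> \<noteq> 0\<^sub>m (2 ^ n) (2 ^ n) \<longleftrightarrow> checks_hold R (assign_outcomes w j os)"
    using unitary.IH[OF C alg_invariant_conj[OF unitary.prems(2) U]] unitary.prems(3) by simp
  finally show ?case .
next
  case (case_a Sj S I eps C j S' R)
  have C: "valid_circuit n C" using case_a.prems(1) by (simp add: valid_circuit_def)
  obtain b os' where os: "os = b # os'" and los: "length os' = num_meas C"
    using case_a.prems(3) by (cases os) auto
  note inv = case_a.prems(2)
  let ?R = "(j, sub_symdiff S I, eps) # R"
  let ?K = "kraus n (flip_meas (minus_checks R) (Suc j) C) os'"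
  let ?P = "proj_prod n (signed_gens w S)" and ?c = "\<Sum>k\<in>sub_symdiff S I. w k"
  have K: "?K \<in> carrier_mat (2 ^ n) (2 ^ n)" using kraus_flip_meas_carrier[OF C] .
  have P: "?P \<in> carrier_mat (2 ^ n) (2 ^ n)" using signed_gens_carrier[OF inv] by (rule proj_prod_carrier)
  have M: "sub_prod n S I \<in> carrier_mat (2 ^ n) (2 ^ n)" using sub_prod_carrier[OF inv case_a.hyps(2)] .
  have "j \<in> minus_checks ?R \<longleftrightarrow> \<not> eps"
    using oca_check_indices[OF case_a.hyps(4)] by (auto simp: minus_checks_def)
  then have measured: "(if j \<in> minus_checks ?R then - Sj else Sj) = sub_prod n S I"
    using case_a.hyps(3) by auto
  have rest: "flip_meas (minus_checks ?R) (Suc j) C = flip_meas (minus_checks R) (Suc j) C"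
    by (rule flip_meas_cong) (auto simp: minus_checks_Cons)
  have "kraus n (flip_meas (minus_checks ?R) j (Meas Sj # C)) os * ?P = ?K * (proj n (sub_prod n S I) b * ?P)"
    using K M P by (simp add: os rest measured mat_simps)
  also have "\<dots> = ?K * (if b = ?c then ?P else 0\<^sub>m (2 ^ n) (2 ^ n))"
    using proj_mult_eigenvector[OF M P sub_prod_mult_proj_prod_signed_gens[OF inv case_a.hyps(2)]] by simp
  finally have lhs: "kraus n (flip_meas (minus_checks ?R) j (Meas Sj # C)) os * ?P =
      ?K * (if b = ?c then ?P else 0\<^sub>m (2 ^ n) (2 ^ n))" .
  have earlier: "(\<Sum>k\<in>sub_symdiff S I. assign_outcomes w j (b # os') k) = ?c"
    using sub_symdiff_bound[OF inv case_a.hyps(2)] by (intro sum.cong) (auto simp: assign_outcomes_below)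
  have "checks_hold ?R (assign_outcomes w j (b # os')) \<longleftrightarrow>
      b + ?c = 0 \<and> checks_hold R (assign_outcomes w j (b # os'))"
    by (simp only: checks_hold_Cons earlier assign_outcomes_first)
  then have checks: "checks_hold ?R (assign_outcomes w j os) \<longleftrightarrow>
      b = ?c \<and> checks_hold R (assign_outcomes (w(j := b)) (Suc j) os')"
    unfolding os bit_add_eq_0_iff assign_outcomes_Cons .
  have "signed_gens (w(j := b)) S = signed_gens w S"
    using alg_invariantD(4)[OF inv] signed_gens_fun_upd by blast
  moreover have "?K * proj_prod n (signed_gens (w(j := b)) S) \<noteq> 0\<^sub>m (2 ^ n) (2 ^ n) \<longleftrightarrow>
      checks_hold R (assign_outcomes (w(j := b)) (Suc j) os')"
    by (rule case_a.IH[OF C alg_invariant_Suc[OF inv] los])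
  ultimately have IH: "?K * ?P \<noteq> 0\<^sub>m (2 ^ n) (2 ^ n) \<longleftrightarrow>
      checks_hold R (assign_outcomes (w(j := b)) (Suc j) os')"
    by (simp only:)
  show ?case
    using lhs checks IH K by (cases "b = ?c") simp_all
next
  case (case_b_anti Sj S t C j S' R)
  have hS: "herm_pauli n Sj" and C: "valid_circuit n C"
    using case_b_anti.prems(1) by (auto simp: valid_circuit_def)
  obtain b os' where os: "os = b # os'" and los: "length os' = num_meas C"
    using case_b_anti.prems(3) by (cases os) auto
  let ?K = "kraus n (flip_meas (minus_checks R) (Suc j) C) os'"
  have "j \<notin> minus_checks R"
    using oca_check_indices[OF case_b_anti.hyps(5)] by (auto simp: minus_checks_def)
  then have "kraus n (flip_meas (minus_checks R) j (Meas Sj # C)) os = ?K * proj n Sj b"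
    by (simp add: os)
  then have "kraus n (flip_meas (minus_checks R) j (Meas Sj # C)) os * proj_prod n (signed_gens w S)
      \<noteq> 0\<^sub>m (2 ^ n) (2 ^ n) \<longleftrightarrow> ?K * proj n Sj b * proj_prod n (signed_gens w S) \<noteq> 0\<^sub>m (2 ^ n) (2 ^ n)"
    by (simp only:)
  also have "\<dots> \<longleftrightarrow> ?K * proj_prod n (signed_gens (w(j := b)) (caseb_update S t Sj @ [(Sj, {j})]))
      \<noteq> 0\<^sub>m (2 ^ n) (2 ^ n)"
    using mult_proj_caseb_eq_zero_iff[OF case_b_anti.prems(2) hS case_b_anti.hyps(3,4)
        kraus_flip_meas_carrier[OF C]] by simp
  also have "\<dots> \<longleftrightarrow> checks_hold R (assign_outcomes w j os)"
    unfolding os assign_outcomes_Cons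
    by (rule case_b_anti.IH[OF C alg_invariant_caseb_update_snoc[OF case_b_anti.prems(2) hS case_b_anti.hyps(3,4,1,2)] los])
  finally show ?case .
next
  case (case_b_comm Sj S C j S' R)
  have hS: "herm_pauli n Sj" and C: "valid_circuit n C"
    using case_b_comm.prems(1) by (auto simp: valid_circuit_def)
  obtain b os' where os: "os = b # os'" and los: "length os' = num_meas C"
    using case_b_comm.prems(3) by (cases os) auto
  note inv = case_b_comm.prems(2)
  have comm: "\<forall>x\<in>set S. fst x * Sj = Sj * fst x"
    using case_b_comm.hyps(3) alg_invariantD(1)[OF inv] commute_if_not_anticommute[OF _ hS]
    by (metis in_set_conv_nth)
  let ?K = "kraus n (flip_meas (minus_checks R) (Suc j) C) os'"
  have "j \<notin> minus_checks R"
    using oca_check_indices[OF case_b_comm.hyps(4)] by (auto simp: minus_checks_def)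
  then have "kraus n (flip_meas (minus_checks R) j (Meas Sj # C)) os = ?K * proj n Sj b"
    by (simp add: os)
  then have "kraus n (flip_meas (minus_checks R) j (Meas Sj # C)) os * proj_prod n (signed_gens w S) =
      ?K * proj_prod n (signed_gens (w(j := b)) (S @ [(Sj, {j})]))"
    using proj_prod_signed_gens_snoc[OF inv herm_pauli_carrier[OF hS] comm] hS
      kraus_flip_meas_carrier[OF C] signed_gens_carrier[OF inv]
    by (simp add: mat_simps herm_pauli_carrier)
  also have "?K * proj_prod n (signed_gens (w(j := b)) (S @ [(Sj, {j})])) \<noteq> 0\<^sub>m (2 ^ n) (2 ^ n) \<longleftrightarrow>
      checks_hold R (assign_outcomes w j os)"
    unfolding os assign_outcomes_Cons
    by (rule case_b_comm.IH[OF C alg_invariant_snoc[OF inv hS comm case_b_comm.hyps(1,2)] los])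
  finally show ?case .
qed

end

section \<open>Outcome codes\<close>

lemma sqnorm_eq_0_iff: "sqnorm v = 0 \<longleftrightarrow> (\<forall>i<dim_vec v. v $ i = 0)"
  unfolding sqnorm_def by (auto simp: sum_nonneg_eq_0_iff)

lemma unit_state_unit_vec: "c < 2 ^ n \<Longrightarrow> unit_state n (unit_vec (2 ^ n) c)"
proof -
  assume c: "c < 2 ^ n"
  have "sqnorm (unit_vec (2 ^ n) c :: complex vec) = (\<Sum>i<2 ^ n. if i = c then 1 else 0)"
    unfolding sqnorm_def by (intro sum.cong) (auto simp: unit_vec_def)
  also have "\<dots> = 1" using c by simp
  finally show ?thesis unfolding unit_state_def by simp
qed

lemma exists_unit_state_sqnorm_nonzero_iff:
  fixes K :: "complex mat"
  assumes K: "K \<in> carrier_mat (2 ^ n) (2 ^ n)"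
  shows "(\<exists>\<psi>. unit_state n \<psi> \<and> sqnorm (K *\<^sub>v \<psi>) \<noteq> 0) \<longleftrightarrow> K \<noteq> 0\<^sub>m (2 ^ n) (2 ^ n)"
proof
  assume "\<exists>\<psi>. unit_state n \<psi> \<and> sqnorm (K *\<^sub>v \<psi>) \<noteq> 0"
  then obtain \<psi> where "unit_state n \<psi>" "sqnorm (K *\<^sub>v \<psi>) \<noteq> 0" by blast
  then show "K \<noteq> 0\<^sub>m (2 ^ n) (2 ^ n)"
    by (auto simp: unit_state_def scalar_prod_def sqnorm_eq_0_iff)
next
  assume "K \<noteq> 0\<^sub>m (2 ^ n) (2 ^ n)"
  then obtain r c where rc: "r < 2 ^ n" "c < 2 ^ n" "K $$ (r, c) \<noteq> 0"
    using K by (metis carrier_matD(1,2) eq_matI index_zero_mat)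
  have "(K *\<^sub>v unit_vec (2 ^ n) c) $ r = K $$ (r, c)"
    using K rc by (simp add: scalar_prod_def unit_vec_def if_distrib lessThan_atLeast0 cong: if_cong)
  then have "sqnorm (K *\<^sub>v unit_vec (2 ^ n) c) \<noteq> 0"
    using rc K by (auto simp: sqnorm_eq_0_iff)
  then show "\<exists>\<psi>. unit_state n \<psi> \<and> sqnorm (K *\<^sub>v \<psi>) \<noteq> 0"
    using unit_state_unit_vec[OF rc(2)] by blast
qed

lemma outcome_code_flip_meas:
  assumes "valid_circuit n C" "oca n C [] 1 S' R"
  shows "outcome_code n (flip_meas (minus_checks R) 1 C) =
    {os. length os = num_meas C \<and> checks_hold R (assign_outcomes (\<lambda>_. 0) 1 os)}"
proof -
  have "kraus n (flip_meas (minus_checks R) 1 C) os \<noteq> 0\<^sub>m (2 ^ n) (2 ^ n) \<longleftrightarrow>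
      checks_hold R (assign_outcomes (\<lambda>_. 0) 1 os)" if "length os = num_meas C" for os
    using kraus_flip_meas_nonzero_iff[OF assms(2,1) alg_invariant_Nil that, of "\<lambda>_. 0"]
      kraus_flip_meas_carrier[OF assms(1)] by (simp add: signed_gens_def)
  then show ?thesis
    unfolding outcome_code_def outcome_prob_def
    using exists_unit_state_sqnorm_nonzero_iff[OF kraus_flip_meas_carrier[OF assms(1)]] by auto
qed

lemma checks_hold_add:
  assumes "checks_hold R f" "checks_hold R g"
  shows "checks_hold R (\<lambda>k. f k + g k)"
  unfolding checks_hold_def
proof (intro ballI, clarify)
  fix j K e assume "(j, K, e) \<in> set R"
  then have "f j + (\<Sum>k\<in>K. f k) = 0" "g j + (\<Sum>k\<in>K. g k) = 0"
    using assms unfolding checks_hold_def by auto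
  moreover have "f j + g j + (\<Sum>k\<in>K. f k + g k) = (f j + (\<Sum>k\<in>K. f k)) + (g j + (\<Sum>k\<in>K. g k))"
    by (simp only: sum.distrib add.assoc add.left_commute)
  ultimately show "f j + g j + (\<Sum>k\<in>K. f k + g k) = 0" by (simp only: add_0_right)
qed

lemma checks_hold_scale:
  assumes "checks_hold R f"
  shows "checks_hold R (\<lambda>k. c * f k)"
  unfolding checks_hold_def
proof (intro ballI, clarify)
  fix j K e assume "(j, K, e) \<in> set R"
  then have "c * (f j + (\<Sum>k\<in>K. f k)) = 0" using assms unfolding checks_hold_def by auto
  then show "c * f j + (\<Sum>k\<in>K. c * f k) = 0" by (simp only: sum_distrib_left distrib_left)
qed

lemma is_subspace_checks_hold:
  "is_subspace m {os. length os = m \<and> checks_hold R (assign_outcomes (\<lambda>_. 0) 1 os)}"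
  unfolding is_subspace_def
proof (intro conjI ballI allI)
  have "assign_outcomes (\<lambda>_. 0) 1 (replicate m 0) = (\<lambda>_. 0)"
    by (rule ext) (auto simp: assign_outcomes_def)
  then show "replicate m 0 \<in> {os. length os = m \<and> checks_hold R (assign_outcomes (\<lambda>_. 0) 1 os)}"
    by (simp add: checks_hold_def)
next
  fix u v assume u: "u \<in> {os. length os = m \<and> checks_hold R (assign_outcomes (\<lambda>_. 0) 1 os)}"
    and v: "v \<in> {os. length os = m \<and> checks_hold R (assign_outcomes (\<lambda>_. 0) 1 os)}"
  then have "assign_outcomes (\<lambda>_. 0) 1 (map2 (+) u v) =
      (\<lambda>k. assign_outcomes (\<lambda>_. 0) 1 u k + assign_outcomes (\<lambda>_. 0) 1 v k)"
    by (intro ext) (auto simp: assign_outcomes_def)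
  then have "checks_hold R (assign_outcomes (\<lambda>_. 0) 1 (map2 (+) u v))"
    by (simp only:) (rule checks_hold_add; use u v in simp)
  then show "map2 (+) u v \<in> {os. length os = m \<and> checks_hold R (assign_outcomes (\<lambda>_. 0) 1 os)}"
    using u v by simp
next
  fix c :: bit and v assume v: "v \<in> {os. length os = m \<and> checks_hold R (assign_outcomes (\<lambda>_. 0) 1 os)}"
  have "assign_outcomes (\<lambda>_. 0) 1 (map ((*) c) v) = (\<lambda>k. c * assign_outcomes (\<lambda>_. 0) 1 v k)"
    by (intro ext) (auto simp: assign_outcomes_def)
  then have "checks_hold R (assign_outcomes (\<lambda>_. 0) 1 (map ((*) c) v))"
    by (simp only:) (rule checks_hold_scale; use v in simp)
  then show "map ((*) c) v \<in> {os. length os = m \<and> checks_hold R (assign_outcomes (\<lambda>_. 0) 1 os)}"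
    using v by simp
qed auto

theorem mainTheorem2:
  fixes n :: nat and C :: circuit and S' :: alg_state
    and R :: "(nat \<times> nat set \<times> bool) list"
  assumes "valid_circuit n C"
    and "oca n C [] 1 S' R"
  shows "is_subspace (num_meas C)
           (outcome_code n (flip_meas {j. \<exists>K. (j, K, False) \<in> set R} 1 C))"
  using outcome_code_flip_meas[OF assms] is_subspace_checks_hold
  by (simp add: minus_checks_def)

end
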